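(* Let $\mathbf{D}$ be a 2-category with an enhanced factorization system $(\mathcal{E},\mathcal{M})$ and let $\mathbf{C}$ be a small 2-category. Suppose that $(\mathcal{E},\mathcal{M})$ separates parallel pairs, every 1-cell in $\mathcal{E}$ is a 2-epimorphism, and every 1-cell in $\mathcal{M}$ is a 2-monomorphism. Then $(\mathcal{E}^{\mathbf{C}},\mathcal{M}^{\mathbf{C}})$ is an enhanced factorization system on $\mathbf{D}^{\mathbf{C}}$.
   Context: For a 2-category $\mathbf{A}$, an enhanced factorization system on $\mathbf{A}$ is a pair $(\mathcal{E},\mathcal{M})$ of classes of 1-cells of $\mathbf{A}$, each containing all isomorphisms, such that: (i) every 1-cell $\alpha$ factors (not necessarily uniquely) as $\alpha=\mu\circ\varepsilon$ with $\varepsilon\in\mathcal{E}$, $\mu\in\mathcal{M}$; (ii) given $\varepsilon\colon F\to F'$ in $\mathcal{E}$, $\mu\colon G\to G'$ in $\mathcal{M}$, 1-cells $\alpha\colon F\to G$, $\alpha'\colon F'\to G'$ and an invertible 2-cell $\Psi\colon \alpha'\varepsilon\Rightarrow\mu\alpha$, there is a unique pair $(\delta,\widetilde\Psi)$ with $\delta\colon F'\to G$ a 1-cell and $\widetilde\Psi\colon\alpha'\Rightarrow\mu\delta$ an invertible 2-cell such that $\delta\varepsilon=\alpha$ and the whiskering $\widetilde\Psi\varepsilon=\Psi$; moreover if $\Psi$ is an identity then $\mu\delta=\alpha'$ and $\widetilde\Psi$ is an identity; (iii) given $\varepsilon\colon F\to F'$ in $\mathcal{E}$, $\mu\colon G\to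 G'$ in $\mathcal{M}$, parallel 1-cells $\alpha_1,\alpha_2\colon F\to G$ and $\alpha_1',\alpha_2'\colon F'\to G'$ with $\alpha_i'\varepsilon=\mu\alpha_i$ ($i=1,2$), and 2-cells $\Phi\colon\alpha_1\Rightarrow\alpha_2$, $\Phi'\colon\alpha_1'\Rightarrow\alpha_2'$ with $\mu\Phi=\Phi'\varepsilon$, let $\delta_i\colon F'\to G$ be the unique 1-cells with $\delta_i\varepsilon=\alpha_i$ and $\mu\delta_i=\alpha_i'$ (from (ii) with identity 2-cell); then there is a unique 2-cell $\Delta\colon\delta_1\Rightarrow\delta_2$ with $\Delta\varepsilon=\Phi$ and $\mu\Delta=\Phi'$. $(\mathcal{E},\mathcal{M})$ separates parallel pairs if whenever $\alpha,\beta\colon F\to G$ are parallel 1-cells for which there exist $\varepsilon\in\mathcal{E}$ with target $F$ and $\alpha\varepsilon=\beta\varepsilon$, and $\mu\in\mathcal{M}$ with source $G$ and $\mu\alpha=\mu\beta$, then $\alpha=\beta$. A 1-cell $\varepsilon\colon F\to G$ is a 2-epimorphism if for all 1-cells $\beta,\beta'\colon G\to H$ and 2-cells $\Psi,\Psi'\colon\beta\Rightarrow\beta'$, $\Psi\varepsilon=\Psi'\varepsilon$ implies $\Psi=\Psi'$. A 1-cell $\mu\colon G\to H$ is a 2-monomorphism if for all 1-cells $\beta,\beta'\colon F\to G$ and 2-cells $\Psi,\Psi'\colon\beta\Rightarrow\beta'$, $\mu\Psi=\mu\Psi'$ implies $\Psi=\Psi'$. $\mathbf{D}^{\mathbf{C}}$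 is the 2-category of 2-functors $\mathbf{C}\to\mathbf{D}$, 2-natural transformations, and modifications. $\mathcal{E}^{\mathbf{C}}$ (resp. $\mathcal{M}^{\mathbf{C}}$) is the class of 2-natural transformations all of whose components lie in $\mathcal{E}$ (resp. $\mathcal{M}$). *)

theory Defs
  imports Main
begin

text \<open>Comp g f is g after f; VComp psi phi is psi after phi (vertical);
  HComp psi phi is the horizontal composite psi * phi (phi first, then psi).\<close>

record ('o, 'a, 'c) twocat =
  Obj   :: "'o set"
  Arr   :: "'a set"
  Cell  :: "'c set"
  Dom   :: "'a \<Rightarrow> 'o"
  Cod   :: "'a \<Rightarrow> 'o"
  Id1   :: "'o \<Rightarrow> 'a"
  Comp  :: "'a \<Rightarrow> 'a \<Rightarrow> 'a"
  Src   :: "'c \<Rightarrow> 'a"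
  Tgt   :: "'c \<Rightarrow> 'a"
  Id2   :: "'a \<Rightarrow> 'c"
  VComp :: "'c \<Rightarrow> 'c \<Rightarrow> 'c"
  HComp :: "'c \<Rightarrow> 'c \<Rightarrow> 'c"

definition hom1 :: "('o,'a,'c,'e) twocat_scheme \<Rightarrow> 'a \<Rightarrow> 'o \<Rightarrow> 'o \<Rightarrow> bool" where
  "hom1 A f X Y \<longleftrightarrow> f \<in> Arr A \<and> Dom A f = X \<and> Cod A f = Y"

definition hom2 :: "('o,'a,'c,'e) twocat_scheme \<Rightarrow> 'c \<Rightarrow> 'a \<Rightarrow> 'a \<Rightarrow> bool" where
  "hom2 A \<phi> f g \<longleftrightarrow> \<phi> \<in> Cell A \<and> Src A \<phi> = f \<and> Tgt A \<phi> = g"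

definition two_category :: "('o,'a,'c,'e) twocat_scheme \<Rightarrow> bool" where
  "two_category A \<longleftrightarrow>
    \<comment> \<open>underlying category of 0- and 1-cells\<close>
    (\<forall>f\<in>Arr A. Dom A f \<in> Obj A \<and> Cod A f \<in> Obj A) \<and>
    (\<forall>X\<in>Obj A. hom1 A (Id1 A X) X X) \<and>
    (\<forall>f\<in>Arr A. \<forall>g\<in>Arr A. Cod A f = Dom A g \<longrightarrow> hom1 A (Comp A g f) (Dom A f) (Cod A g)) \<and>
    (\<forall>f\<in>Arr A. \<forall>g\<in>Arr A. \<forall>h\<in>Arr A. Cod A f = Dom A g \<longrightarrow> Cod A g = Dom A h \<longrightarrow>
        Comp A h (Comp A g f) = Comp A (Comp A h g) f) \<and>
    (\<forall>f\<in>Arr A. Comp A f (Id1 A (Dom A f)) = f \<and> Comp A (Id1 A (Cod A f)) f = f) \<and>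
    \<comment> \<open>2-cells are between parallel 1-cells\<close>
    (\<forall>\<phi>\<in>Cell A. Src A \<phi> \<in> Arr A \<and> Tgt A \<phi> \<in> Arr A \<and>
        Dom A (Src A \<phi>) = Dom A (Tgt A \<phi>) \<and> Cod A (Src A \<phi>) = Cod A (Tgt A \<phi>)) \<and>
    \<comment> \<open>vertical composition: a category structure on 2-cells\<close>
    (\<forall>f\<in>Arr A. hom2 A (Id2 A f) f f) \<and>
    (\<forall>\<phi>\<in>Cell A. \<forall>\<psi>\<in>Cell A. Tgt A \<phi> = Src A \<psi> \<longrightarrow>
        hom2 A (VComp A \<psi> \<phi>) (Src A \<phi>) (Tgt A \<psi>)) \<and>
    (\<forall>\<phi>\<in>Cell A. \<forall>\<psi>\<in>Cell A. \<forall>\<chi>\<in>Cell A. Tgt A \<phi> = Src A \<psi> \<longrightarrow> Tgt A \<psi> = Src A \<chi> \<longrightarrow>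
        VComp A \<chi> (VComp A \<psi> \<phi>) = VComp A (VComp A \<chi> \<psi>) \<phi>) \<and>
    (\<forall>\<phi>\<in>Cell A. VComp A \<phi> (Id2 A (Src A \<phi>)) = \<phi> \<and> VComp A (Id2 A (Tgt A \<phi>)) \<phi> = \<phi>) \<and>
    \<comment> \<open>horizontal composition\<close>
    (\<forall>\<phi>\<in>Cell A. \<forall>\<psi>\<in>Cell A. Cod A (Src A \<phi>) = Dom A (Src A \<psi>) \<longrightarrow>
        hom2 A (HComp A \<psi> \<phi>) (Comp A (Src A \<psi>) (Src A \<phi>)) (Comp A (Tgt A \<psi>) (Tgt A \<phi>))) \<and>
    (\<forall>\<phi>\<in>Cell A. \<forall>\<psi>\<in>Cell A. \<forall>\<chi>\<in>Cell A.
        Cod A (Src A \<phi>) = Dom A (Src A \<psi>) \<longrightarrow> Cod A (Src A \<psi>) = Dom A (Src A \<chi>) \<longrightarrow>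
        HComp A \<chi> (HComp A \<psi> \<phi>) = HComp A (HComp A \<chi> \<psi>) \<phi>) \<and>
    (\<forall>\<phi>\<in>Cell A. HComp A \<phi> (Id2 A (Id1 A (Dom A (Src A \<phi>)))) = \<phi> \<and>
                 HComp A (Id2 A (Id1 A (Cod A (Src A \<phi>)))) \<phi> = \<phi>) \<and>
    (\<forall>f\<in>Arr A. \<forall>g\<in>Arr A. Cod A f = Dom A g \<longrightarrow>
        HComp A (Id2 A g) (Id2 A f) = Id2 A (Comp A g f)) \<and>
    \<comment> \<open>interchange law\<close>
    (\<forall>\<phi>\<in>Cell A. \<forall>\<phi>'\<in>Cell A. \<forall>\<psi>\<in>Cell A. \<forall>\<psi>'\<in>Cell A.
        Tgt A \<phi> = Src A \<phi>' \<longrightarrow> Tgt A \<psi> = Src A \<psi>' \<longrightarrow> Cod A (Src A \<phi>) = Dom A (Src A \<psi>) \<longrightarrow>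
        HComp A (VComp A \<psi>' \<psi>) (VComp A \<phi>' \<phi>) = VComp A (HComp A \<psi>' \<phi>') (HComp A \<psi> \<phi>))"

definition whiskR :: "('o,'a,'c,'e) twocat_scheme \<Rightarrow> 'c \<Rightarrow> 'a \<Rightarrow> 'c" where
  "whiskR A \<Psi> f = HComp A \<Psi> (Id2 A f)"

definition whiskL :: "('o,'a,'c,'e) twocat_scheme \<Rightarrow> 'a \<Rightarrow> 'c \<Rightarrow> 'c" where
  "whiskL A f \<Psi> = HComp A (Id2 A f) \<Psi>"

definition iso1 :: "('o,'a,'c,'e) twocat_scheme \<Rightarrow> 'a \<Rightarrow> bool" where
  "iso1 A f \<longleftrightarrow> f \<in> Arr A \<and> (\<exists>g. hom1 A g (Cod A f) (Dom A f) \<and>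
      Comp A g f = Id1 A (Dom A f) \<and> Comp A f g = Id1 A (Cod A f))"

definition iso2 :: "('o,'a,'c,'e) twocat_scheme \<Rightarrow> 'c \<Rightarrow> bool" where
  "iso2 A \<phi> \<longleftrightarrow> \<phi> \<in> Cell A \<and> (\<exists>\<psi>. hom2 A \<psi> (Tgt A \<phi>) (Src A \<phi>) \<and>
      VComp A \<psi> \<phi> = Id2 A (Src A \<phi>) \<and> VComp A \<phi> \<psi> = Id2 A (Tgt A \<phi>))"

definition enhanced_fs :: "('o,'a,'c,'e) twocat_scheme \<Rightarrow> 'a set \<Rightarrow> 'a set \<Rightarrow> bool" where
  "enhanced_fs A E M \<longleftrightarrow>
    E \<subseteq> Arr A \<and> M \<subseteq> Arr A \<and>
    {f. iso1 A f} \<subseteq> E \<and> {f. iso1 A f} \<subseteq> M \<and>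
    \<comment> \<open>(i)\<close>
    (\<forall>\<alpha>\<in>Arr A. \<exists>\<epsilon>\<in>E. \<exists>\<mu>\<in>M. Cod A \<epsilon> = Dom A \<mu> \<and> \<alpha> = Comp A \<mu> \<epsilon>) \<and>
    \<comment> \<open>(ii)\<close>
    (\<forall>\<epsilon>\<in>E. \<forall>\<mu>\<in>M. \<forall>\<alpha> \<alpha>' \<Psi>.
       let F = Dom A \<epsilon>; F' = Cod A \<epsilon>; G = Dom A \<mu>; G' = Cod A \<mu> in
       hom1 A \<alpha> F G \<longrightarrow> hom1 A \<alpha>' F' G' \<longrightarrow>
       hom2 A \<Psi> (Comp A \<alpha>' \<epsilon>) (Comp A \<mu> \<alpha>) \<longrightarrow> iso2 A \<Psi> \<longrightarrow>
       (\<exists>!(\<delta>, \<Psi>'). hom1 A \<delta> F' G \<and> hom2 A \<Psi>' \<alpha>' (Comp A \<mu> \<delta>) \<and> iso2 A \<Psi>' \<and>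
            Comp A \<delta> \<epsilon> = \<alpha> \<and> whiskR A \<Psi>' \<epsilon> = \<Psi>) \<and>
       (\<forall>\<delta> \<Psi>'. hom1 A \<delta> F' G \<and> hom2 A \<Psi>' \<alpha>' (Comp A \<mu> \<delta>) \<and> iso2 A \<Psi>' \<and>
            Comp A \<delta> \<epsilon> = \<alpha> \<and> whiskR A \<Psi>' \<epsilon> = \<Psi> \<longrightarrow>
            \<Psi> = Id2 A (Comp A \<alpha>' \<epsilon>) \<longrightarrow> Comp A \<mu> \<delta> = \<alpha>' \<and> \<Psi>' = Id2 A \<alpha>')) \<and>
    \<comment> \<open>(iii)\<close>
    (\<forall>\<epsilon>\<in>E. \<forall>\<mu>\<in>M. \<forall>\<alpha>1 \<alpha>2 \<alpha>1' \<alpha>2' \<Phi> \<Phi>' \<delta>1 \<delta>2.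
       let F = Dom A \<epsilon>; F' = Cod A \<epsilon>; G = Dom A \<mu>; G' = Cod A \<mu> in
       hom1 A \<alpha>1 F G \<longrightarrow> hom1 A \<alpha>2 F G \<longrightarrow> hom1 A \<alpha>1' F' G' \<longrightarrow> hom1 A \<alpha>2' F' G' \<longrightarrow>
       Comp A \<alpha>1' \<epsilon> = Comp A \<mu> \<alpha>1 \<longrightarrow> Comp A \<alpha>2' \<epsilon> = Comp A \<mu> \<alpha>2 \<longrightarrow>
       hom2 A \<Phi> \<alpha>1 \<alpha>2 \<longrightarrow> hom2 A \<Phi>' \<alpha>1' \<alpha>2' \<longrightarrow> whiskL A \<mu> \<Phi> = whiskR A \<Phi>' \<epsilon> \<longrightarrow>
       hom1 A \<delta>1 F' G \<longrightarrow> Comp A \<delta>1 \<epsilon> = \<alpha>1 \<longrightarrow> Comp A \<mu> \<delta>1 = \<alpha>1' \<longrightarrow>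
       hom1 A \<delta>2 F' G \<longrightarrow> Comp A \<delta>2 \<epsilon> = \<alpha>2 \<longrightarrow> Comp A \<mu> \<delta>2 = \<alpha>2' \<longrightarrow>
       (\<exists>!\<Delta>. hom2 A \<Delta> \<delta>1 \<delta>2 \<and> whiskR A \<Delta> \<epsilon> = \<Phi> \<and> whiskL A \<mu> \<Delta> = \<Phi>'))"

definition separates_parallel_pairs ::
  "('o,'a,'c,'e) twocat_scheme \<Rightarrow> 'a set \<Rightarrow> 'a set \<Rightarrow> bool" where
  "separates_parallel_pairs A E M \<longleftrightarrow>
    (\<forall>\<alpha> \<beta> F G. hom1 A \<alpha> F G \<longrightarrow> hom1 A \<beta> F G \<longrightarrow>
       (\<exists>\<epsilon>\<in>E. Cod A \<epsilon> = F \<and> Comp A \<alpha> \<epsilon> = Comp A \<beta> \<epsilon>) \<longrightarrow>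
       (\<exists>\<mu>\<in>M. Dom A \<mu> = G \<and> Comp A \<mu> \<alpha> = Comp A \<mu> \<beta>) \<longrightarrow> \<alpha> = \<beta>)"

definition two_epi :: "('o,'a,'c,'e) twocat_scheme \<Rightarrow> 'a \<Rightarrow> bool" where
  "two_epi A \<epsilon> \<longleftrightarrow> \<epsilon> \<in> Arr A \<and>
    (\<forall>\<beta> \<beta>' H \<Psi> \<Psi>'. hom1 A \<beta> (Cod A \<epsilon>) H \<longrightarrow> hom1 A \<beta>' (Cod A \<epsilon>) H \<longrightarrow>
       hom2 A \<Psi> \<beta> \<beta>' \<longrightarrow> hom2 A \<Psi>' \<beta> \<beta>' \<longrightarrow> whiskR A \<Psi> \<epsilon> = whiskR A \<Psi>' \<epsilon> \<longrightarrow> \<Psi> = \<Psi>')"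

definition two_mono :: "('o,'a,'c,'e) twocat_scheme \<Rightarrow> 'a \<Rightarrow> bool" where
  "two_mono A \<mu> \<longleftrightarrow> \<mu> \<in> Arr A \<and>
    (\<forall>\<beta> \<beta>' F \<Psi> \<Psi>'. hom1 A \<beta> F (Dom A \<mu>) \<longrightarrow> hom1 A \<beta>' F (Dom A \<mu>) \<longrightarrow>
       hom2 A \<Psi> \<beta> \<beta>' \<longrightarrow> hom2 A \<Psi>' \<beta> \<beta>' \<longrightarrow> whiskL A \<mu> \<Psi> = whiskL A \<mu> \<Psi>' \<longrightarrow> \<Psi> = \<Psi>')"

text \<open>2-functors, 2-natural transformations and modifications are represented
  extensionally: all component maps are undefined outside the carriers of C.\<close>

record ('o1, 'a1, 'c1, 'o2, 'a2, 'c2) tfun =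
  FO :: "'o1 \<Rightarrow> 'o2"
  FA :: "'a1 \<Rightarrow> 'a2"
  FC :: "'c1 \<Rightarrow> 'c2"

record ('o1, 'a1, 'c1, 'o2, 'a2, 'c2) tnat =
  NSrc :: "('o1, 'a1, 'c1, 'o2, 'a2, 'c2) tfun"
  NTgt :: "('o1, 'a1, 'c1, 'o2, 'a2, 'c2) tfun"
  NCmp :: "'o1 \<Rightarrow> 'a2"

record ('o1, 'a1, 'c1, 'o2, 'a2, 'c2) tmod =
  MSrc :: "('o1, 'a1, 'c1, 'o2, 'a2, 'c2) tnat"
  MTgt :: "('o1, 'a1, 'c1, 'o2, 'a2, 'c2) tnat"
  MCmp :: "'o1 \<Rightarrow> 'c2"

definition two_functor ::
  "('o1,'a1,'c1) twocat \<Rightarrow> ('o2,'a2,'c2) twocat \<Rightarrow> ('o1,'a1,'c1,'o2,'a2,'c2) tfun \<Rightarrow> bool" where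
  "two_functor C D F \<longleftrightarrow>
    (\<forall>X. X \<notin> Obj C \<longrightarrow> FO F X = undefined) \<and>
    (\<forall>f. f \<notin> Arr C \<longrightarrow> FA F f = undefined) \<and>
    (\<forall>\<phi>. \<phi> \<notin> Cell C \<longrightarrow> FC F \<phi> = undefined) \<and>
    (\<forall>X\<in>Obj C. FO F X \<in> Obj D) \<and>
    (\<forall>f\<in>Arr C. hom1 D (FA F f) (FO F (Dom C f)) (FO F (Cod C f))) \<and>
    (\<forall>X\<in>Obj C. FA F (Id1 C X) = Id1 D (FO F X)) \<and>
    (\<forall>f\<in>Arr C. \<forall>g\<in>Arr C. Cod C f = Dom C g \<longrightarrow> FA F (Comp C g f) = Comp D (FA F g) (FA F f)) \<and>
    (\<forall>\<phi>\<in>Cell C. hom2 D (FC F \<phi>) (FA F (Src C \<phi>)) (FA F (Tgt C \<phi>))) \<and>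
    (\<forall>f\<in>Arr C. FC F (Id2 C f) = Id2 D (FA F f)) \<and>
    (\<forall>\<phi>\<in>Cell C. \<forall>\<psi>\<in>Cell C. Tgt C \<phi> = Src C \<psi> \<longrightarrow>
        FC F (VComp C \<psi> \<phi>) = VComp D (FC F \<psi>) (FC F \<phi>)) \<and>
    (\<forall>\<phi>\<in>Cell C. \<forall>\<psi>\<in>Cell C. Cod C (Src C \<phi>) = Dom C (Src C \<psi>) \<longrightarrow>
        FC F (HComp C \<psi> \<phi>) = HComp D (FC F \<psi>) (FC F \<phi>))"

definition two_nat ::
  "('o1,'a1,'c1) twocat \<Rightarrow> ('o2,'a2,'c2) twocat \<Rightarrow> ('o1,'a1,'c1,'o2,'a2,'c2) tnat \<Rightarrow> bool" where
  "two_nat C D \<eta> \<longleftrightarrow>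
    two_functor C D (NSrc \<eta>) \<and> two_functor C D (NTgt \<eta>) \<and>
    (\<forall>X. X \<notin> Obj C \<longrightarrow> NCmp \<eta> X = undefined) \<and>
    (\<forall>X\<in>Obj C. hom1 D (NCmp \<eta> X) (FO (NSrc \<eta>) X) (FO (NTgt \<eta>) X)) \<and>
    (\<forall>f\<in>Arr C. Comp D (FA (NTgt \<eta>) f) (NCmp \<eta> (Dom C f)) =
                Comp D (NCmp \<eta> (Cod C f)) (FA (NSrc \<eta>) f)) \<and>
    (\<forall>\<phi>\<in>Cell C. whiskL D (NCmp \<eta> (Cod C (Src C \<phi>))) (FC (NSrc \<eta>) \<phi>) =
                 whiskR D (FC (NTgt \<eta>) \<phi>) (NCmp \<eta> (Dom C (Src C \<phi>))))"

definition modification ::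
  "('o1,'a1,'c1) twocat \<Rightarrow> ('o2,'a2,'c2) twocat \<Rightarrow> ('o1,'a1,'c1,'o2,'a2,'c2) tmod \<Rightarrow> bool" where
  "modification C D \<Gamma> \<longleftrightarrow>
    two_nat C D (MSrc \<Gamma>) \<and> two_nat C D (MTgt \<Gamma>) \<and>
    NSrc (MSrc \<Gamma>) = NSrc (MTgt \<Gamma>) \<and> NTgt (MSrc \<Gamma>) = NTgt (MTgt \<Gamma>) \<and>
    (\<forall>X. X \<notin> Obj C \<longrightarrow> MCmp \<Gamma> X = undefined) \<and>
    (\<forall>X\<in>Obj C. hom2 D (MCmp \<Gamma> X) (NCmp (MSrc \<Gamma>) X) (NCmp (MTgt \<Gamma>) X)) \<and>
    (\<forall>f\<in>Arr C. whiskR D (MCmp \<Gamma> (Cod C f)) (FA (NSrc (MSrc \<Gamma>)) f) =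
                whiskL D (FA (NTgt (MSrc \<Gamma>)) f) (MCmp \<Gamma> (Dom C f)))"

definition nat_comp ::
  "('o1,'a1,'c1) twocat \<Rightarrow> ('o2,'a2,'c2) twocat \<Rightarrow> ('o1,'a1,'c1,'o2,'a2,'c2) tnat
     \<Rightarrow> ('o1,'a1,'c1,'o2,'a2,'c2) tnat \<Rightarrow> ('o1,'a1,'c1,'o2,'a2,'c2) tnat" where
  "nat_comp C D \<beta> \<alpha> = \<lparr> NSrc = NSrc \<alpha>, NTgt = NTgt \<beta>,
     NCmp = (\<lambda>X. if X \<in> Obj C then Comp D (NCmp \<beta> X) (NCmp \<alpha> X) else undefined) \<rparr>"

definition functor_cat ::
  "('o1,'a1,'c1) twocat \<Rightarrow> ('o2,'a2,'c2) twocat \<Rightarrow>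
   (('o1,'a1,'c1,'o2,'a2,'c2) tfun, ('o1,'a1,'c1,'o2,'a2,'c2) tnat,
    ('o1,'a1,'c1,'o2,'a2,'c2) tmod) twocat" where
  "functor_cat C D = \<lparr>
     Obj = {F. two_functor C D F},
     Arr = {\<eta>. two_nat C D \<eta>},
     Cell = {\<Gamma>. modification C D \<Gamma>},
     Dom = NSrc,
     Cod = NTgt,
     Id1 = (\<lambda>F. \<lparr> NSrc = F, NTgt = F,
              NCmp = (\<lambda>X. if X \<in> Obj C then Id1 D (FO F X) else undefined) \<rparr>),
     Comp = nat_comp C D,
     Src = MSrc,
     Tgt = MTgt,
     Id2 = (\<lambda>\<eta>. \<lparr> MSrc = \<eta>, MTgt = \<eta>,
              MCmp = (\<lambda>X. if X \<in> Obj C then Id2 D (NCmp \<eta> X) else undefined) \<rparr>),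
     VComp = (\<lambda>\<Delta> \<Gamma>. \<lparr> MSrc = MSrc \<Gamma>, MTgt = MTgt \<Delta>,
              MCmp = (\<lambda>X. if X \<in> Obj C then VComp D (MCmp \<Delta> X) (MCmp \<Gamma> X) else undefined) \<rparr>),
     HComp = (\<lambda>\<Delta> \<Gamma>. \<lparr> MSrc = nat_comp C D (MSrc \<Delta>) (MSrc \<Gamma>),
                       MTgt = nat_comp C D (MTgt \<Delta>) (MTgt \<Gamma>),
              MCmp = (\<lambda>X. if X \<in> Obj C then HComp D (MCmp \<Delta> X) (MCmp \<Gamma> X) else undefined) \<rparr>)
   \<rparr>"

definition pointwise_class ::
  "('o1,'a1,'c1) twocat \<Rightarrow> ('o2,'a2,'c2) twocat \<Rightarrow> 'a2 set \<Rightarrow> ('o1,'a1,'c1,'o2,'a2,'c2) tnat set" where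
  "pointwise_class C D K = {\<eta>. two_nat C D \<eta> \<and> (\<forall>X\<in>Obj C. NCmp \<eta> X \<in> K)}"

end

theory Submission
  imports Defs
begin

text \<open>Everything in the functor 2-category is computed componentwise. To factor a 2-natural
  transformation, factor each of its components in \<open>D\<close>; the strict diagonal fillers of the
  naturality squares, and the unique 2-cells between them given by (iii), assemble the middle
  objects into a 2-functor for which both halves are 2-natural. To solve a lifting problem in
  \<open>D\<^sup>C\<close>, solve it at every object of \<open>C\<close>. The solutions form a 2-natural transformation
  and a modification: along a 1-cell \<open>f\<close> the two composites of a lift with \<open>f\<close> solve one and
  the same lifting problem in \<open>D\<close>, hence coincide by uniqueness, and 2-naturality holds because
  both sides agree after whiskering with a component of the left map, which is a
  2-epimorphism. Condition (iii) is verified in the same way.\<close>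

lemma ex1_pairI:
  assumes "Q a b" "\<And>x y. Q x y \<Longrightarrow> x = a \<and> y = b"
  shows "\<exists>!(x, y). Q x y"
proof (rule ex1I[of _ "(a, b)"])
  fix p assume "case p of (x, y) \<Rightarrow> Q x y"
  then show "p = (a, b)" using assms(2) by (cases p) simp
qed (use assms(1) in simp)

section \<open>Basic 2-category calculus\<close>

locale two_cat =
  fixes A :: "('o,'a,'c) twocat"
  assumes dom_cod_obj_ax: "\<forall>f\<in>Arr A. Dom A f \<in> Obj A \<and> Cod A f \<in> Obj A"
    and id1_hom_ax: "\<forall>X\<in>Obj A. hom1 A (Id1 A X) X X"
    and comp_hom_ax: "\<forall>f\<in>Arr A. \<forall>g\<in>Arr A. Cod A f = Dom A g \<longrightarrow> hom1 A (Comp A g f) (Dom A f) (Cod A g)"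
    and comp_assoc_ax: "\<forall>f\<in>Arr A. \<forall>g\<in>Arr A. \<forall>h\<in>Arr A. Cod A f = Dom A g \<longrightarrow> Cod A g = Dom A h \<longrightarrow>
        Comp A h (Comp A g f) = Comp A (Comp A h g) f"
    and comp_id_ax: "\<forall>f\<in>Arr A. Comp A f (Id1 A (Dom A f)) = f \<and> Comp A (Id1 A (Cod A f)) f = f"
    and cell_parallel_ax: "\<forall>\<phi>\<in>Cell A. Src A \<phi> \<in> Arr A \<and> Tgt A \<phi> \<in> Arr A \<and>
        Dom A (Src A \<phi>) = Dom A (Tgt A \<phi>) \<and> Cod A (Src A \<phi>) = Cod A (Tgt A \<phi>)"
    and id2_hom_ax: "\<forall>f\<in>Arr A. hom2 A (Id2 A f) f f"
    and vcomp_hom_ax: "\<forall>\<phi>\<in>Cell A. \<forall>\<psi>\<in>Cell A. Tgt A \<phi> = Src A \<psi> \<longrightarrow>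
        hom2 A (VComp A \<psi> \<phi>) (Src A \<phi>) (Tgt A \<psi>)"
    and vcomp_assoc_ax: "\<forall>\<phi>\<in>Cell A. \<forall>\<psi>\<in>Cell A. \<forall>\<chi>\<in>Cell A. Tgt A \<phi> = Src A \<psi> \<longrightarrow> Tgt A \<psi> = Src A \<chi> \<longrightarrow>
        VComp A \<chi> (VComp A \<psi> \<phi>) = VComp A (VComp A \<chi> \<psi>) \<phi>"
    and vcomp_id_ax: "\<forall>\<phi>\<in>Cell A. VComp A \<phi> (Id2 A (Src A \<phi>)) = \<phi> \<and> VComp A (Id2 A (Tgt A \<phi>)) \<phi> = \<phi>"
    and hcomp_hom_ax: "\<forall>\<phi>\<in>Cell A. \<forall>\<psi>\<in>Cell A. Cod A (Src A \<phi>) = Dom A (Src A \<psi>) \<longrightarrow>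
        hom2 A (HComp A \<psi> \<phi>) (Comp A (Src A \<psi>) (Src A \<phi>)) (Comp A (Tgt A \<psi>) (Tgt A \<phi>))"
    and hcomp_assoc_ax: "\<forall>\<phi>\<in>Cell A. \<forall>\<psi>\<in>Cell A. \<forall>\<chi>\<in>Cell A.
        Cod A (Src A \<phi>) = Dom A (Src A \<psi>) \<longrightarrow> Cod A (Src A \<psi>) = Dom A (Src A \<chi>) \<longrightarrow>
        HComp A \<chi> (HComp A \<psi> \<phi>) = HComp A (HComp A \<chi> \<psi>) \<phi>"
    and hcomp_id_ax: "\<forall>\<phi>\<in>Cell A. HComp A \<phi> (Id2 A (Id1 A (Dom A (Src A \<phi>)))) = \<phi> \<and>
                 HComp A (Id2 A (Id1 A (Cod A (Src A \<phi>)))) \<phi> = \<phi>"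
    and hcomp_id2_ax: "\<forall>f\<in>Arr A. \<forall>g\<in>Arr A. Cod A f = Dom A g \<longrightarrow>
        HComp A (Id2 A g) (Id2 A f) = Id2 A (Comp A g f)"
    and interchange_ax: "\<forall>\<phi>\<in>Cell A. \<forall>\<phi>'\<in>Cell A. \<forall>\<psi>\<in>Cell A. \<forall>\<psi>'\<in>Cell A.
        Tgt A \<phi> = Src A \<phi>' \<longrightarrow> Tgt A \<psi> = Src A \<psi>' \<longrightarrow> Cod A (Src A \<phi>) = Dom A (Src A \<psi>) \<longrightarrow>
        HComp A (VComp A \<psi>' \<psi>) (VComp A \<phi>' \<phi>) = VComp A (HComp A \<psi>' \<phi>') (HComp A \<psi> \<phi>)"

lemma two_cat_iff_two_category: "two_cat A \<longleftrightarrow> two_category A"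
  unfolding two_cat_def two_category_def conj_assoc ..

context two_cat
begin

lemma dom_cod_obj: "f \<in> Arr A \<Longrightarrow> Dom A f \<in> Obj A \<and> Cod A f \<in> Obj A"
  using dom_cod_obj_ax by blast

lemma id1_hom: "X \<in> Obj A \<Longrightarrow> hom1 A (Id1 A X) X X"
  using id1_hom_ax by blast

lemma comp_hom: "hom1 A f X Y \<Longrightarrow> hom1 A g Y Z \<Longrightarrow> hom1 A (Comp A g f) X Z"
  using comp_hom_ax unfolding hom1_def by metis

lemma comp_assoc: "hom1 A f X Y \<Longrightarrow> hom1 A g Y Z \<Longrightarrow> hom1 A h Z W \<Longrightarrow>
   Comp A h (Comp A g f) = Comp A (Comp A h g) f"
  using comp_assoc_ax unfolding hom1_def by metis

lemma comp_id_left: "hom1 A f X Y \<Longrightarrow> Comp A (Id1 A Y) f = f"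
  using comp_id_ax unfolding hom1_def by metis

lemma comp_id_right: "hom1 A f X Y \<Longrightarrow> Comp A f (Id1 A X) = f"
  using comp_id_ax unfolding hom1_def by metis

lemma hom2_parallel: "hom2 A \<phi> f g \<Longrightarrow> f \<in> Arr A \<and> g \<in> Arr A \<and> Dom A f = Dom A g \<and> Cod A f = Cod A g"
  using cell_parallel_ax unfolding hom2_def by metis

lemma id2_hom: "f \<in> Arr A \<Longrightarrow> hom2 A (Id2 A f) f f"
  using id2_hom_ax by blast

lemma vcomp_hom: "hom2 A \<phi> f g \<Longrightarrow> hom2 A \<psi> g h \<Longrightarrow> hom2 A (VComp A \<psi> \<phi>) f h"
  using vcomp_hom_ax unfolding hom2_def by metis

lemma vcomp_assoc: "hom2 A \<phi> f g \<Longrightarrow> hom2 A \<psi> g h \<Longrightarrow> hom2 A \<chi> h k \<Longrightarrow>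
   VComp A \<chi> (VComp A \<psi> \<phi>) = VComp A (VComp A \<chi> \<psi>) \<phi>"
  using vcomp_assoc_ax unfolding hom2_def by metis

lemma vcomp_id_left: "hom2 A \<phi> f g \<Longrightarrow> VComp A (Id2 A g) \<phi> = \<phi>"
  using vcomp_id_ax unfolding hom2_def by metis

lemma vcomp_id_right: "hom2 A \<phi> f g \<Longrightarrow> VComp A \<phi> (Id2 A f) = \<phi>"
  using vcomp_id_ax unfolding hom2_def by metis

lemma hcomp_hom: "hom2 A \<phi> f f' \<Longrightarrow> hom2 A \<psi> g g' \<Longrightarrow> Cod A f = Dom A g \<Longrightarrow>
   hom2 A (HComp A \<psi> \<phi>) (Comp A g f) (Comp A g' f')"
  using hcomp_hom_ax unfolding hom2_def by metis

lemma hcomp_assoc: "hom2 A \<phi> f f' \<Longrightarrow> hom2 A \<psi> g g' \<Longrightarrow> hom2 A \<chi> h h' \<Longrightarrow>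
   Cod A f = Dom A g \<Longrightarrow> Cod A g = Dom A h \<Longrightarrow>
   HComp A \<chi> (HComp A \<psi> \<phi>) = HComp A (HComp A \<chi> \<psi>) \<phi>"
  using hcomp_assoc_ax unfolding hom2_def by metis

lemma hcomp_id2: "hom1 A f X Y \<Longrightarrow> hom1 A g Y Z \<Longrightarrow>
   HComp A (Id2 A g) (Id2 A f) = Id2 A (Comp A g f)"
  using hcomp_id2_ax unfolding hom1_def by metis

lemma interchange: "hom2 A \<phi> f f1 \<Longrightarrow> hom2 A \<phi>' f1 f2 \<Longrightarrow> hom2 A \<psi> g g1 \<Longrightarrow>
   hom2 A \<psi>' g1 g2 \<Longrightarrow> Cod A f = Dom A g \<Longrightarrow>
   HComp A (VComp A \<psi>' \<psi>) (VComp A \<phi>' \<phi>) = VComp A (HComp A \<psi>' \<phi>') (HComp A \<psi> \<phi>)"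
  using interchange_ax unfolding hom2_def by metis

lemma hom1_obj: "hom1 A f X Y \<Longrightarrow> X \<in> Obj A \<and> Y \<in> Obj A"
  using dom_cod_obj by (auto simp: hom1_def)

lemma cell_hom: "\<phi> \<in> Cell A \<Longrightarrow> hom2 A \<phi> (Src A \<phi>) (Tgt A \<phi>) \<and>
   hom1 A (Src A \<phi>) (Dom A (Src A \<phi>)) (Cod A (Src A \<phi>)) \<and>
   hom1 A (Tgt A \<phi>) (Dom A (Src A \<phi>)) (Cod A (Src A \<phi>))"
  using cell_parallel_ax by (auto simp: hom1_def hom2_def)

lemma hom1_arr: "hom1 A f X Y \<Longrightarrow> f \<in> Arr A"
  by (simp add: hom1_def)

lemma hom1I: "f \<in> Arr A \<Longrightarrow> hom1 A f (Dom A f) (Cod A f)"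
  by (simp add: hom1_def)

lemma whiskR_hom: "hom2 A \<Psi> b b' \<Longrightarrow> hom1 A f X (Dom A b) \<Longrightarrow>
   hom2 A (whiskR A \<Psi> f) (Comp A b f) (Comp A b' f)"
  unfolding whiskR_def by (rule hcomp_hom[OF id2_hom[OF hom1_arr]]) (auto simp: hom1_def)

lemma whiskL_hom: "hom2 A \<Psi> b b' \<Longrightarrow> hom1 A f (Cod A b) Z \<Longrightarrow>
   hom2 A (whiskL A f \<Psi>) (Comp A f b) (Comp A f b')"
  unfolding whiskL_def by (rule hcomp_hom[OF _ id2_hom[OF hom1_arr]]) (auto simp: hom1_def)

lemma whiskR_id2: "hom1 A b Y Z \<Longrightarrow> hom1 A f X Y \<Longrightarrow> whiskR A (Id2 A b) f = Id2 A (Comp A b f)"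
  unfolding whiskR_def by (rule hcomp_id2)

lemma whiskL_id2: "hom1 A b Y Z \<Longrightarrow> hom1 A f Z W \<Longrightarrow> whiskL A f (Id2 A b) = Id2 A (Comp A f b)"
  unfolding whiskL_def by (rule hcomp_id2)

lemma whiskR_whiskR: "hom2 A \<Psi> b b' \<Longrightarrow> hom1 A g Y (Dom A b) \<Longrightarrow> hom1 A f X Y \<Longrightarrow>
   whiskR A (whiskR A \<Psi> g) f = whiskR A \<Psi> (Comp A g f)"
  unfolding whiskR_def
  by (subst hcomp_assoc[OF id2_hom[OF hom1_arr] id2_hom[OF hom1_arr], symmetric])
     (auto simp: hom1_def hcomp_id2)

lemma whiskL_whiskL: "hom2 A \<Psi> b b' \<Longrightarrow> hom1 A f (Cod A b) Y \<Longrightarrow> hom1 A g Y Z \<Longrightarrow>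
   whiskL A g (whiskL A f \<Psi>) = whiskL A (Comp A g f) \<Psi>"
  unfolding whiskL_def
  by (subst hcomp_assoc[OF _ id2_hom[OF hom1_arr] id2_hom[OF hom1_arr]])
     (auto simp: hom1_def hcomp_id2)

lemma whiskL_whiskR: "hom2 A \<Psi> b b' \<Longrightarrow> hom1 A f X (Dom A b) \<Longrightarrow> hom1 A g (Cod A b) Z \<Longrightarrow>
   whiskL A g (whiskR A \<Psi> f) = whiskR A (whiskL A g \<Psi>) f"
  unfolding whiskL_def whiskR_def
  by (rule hcomp_assoc[OF id2_hom[OF hom1_arr] _ id2_hom[OF hom1_arr]]) (auto simp: hom1_def)

lemma whiskR_vcomp:
  assumes "hom2 A \<phi> b b1" "hom2 A \<psi> b1 b2" "hom1 A f X (Dom A b)"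
  shows "whiskR A (VComp A \<psi> \<phi>) f = VComp A (whiskR A \<psi> f) (whiskR A \<phi> f)"
proof -
  have f: "hom2 A (Id2 A f) f f" using assms(3) id2_hom hom1_arr by blast
  have "HComp A (VComp A \<psi> \<phi>) (VComp A (Id2 A f) (Id2 A f)) =
        VComp A (HComp A \<psi> (Id2 A f)) (HComp A \<phi> (Id2 A f))"
    by (rule interchange[OF f f assms(1,2)]) (use assms(3) in \<open>simp add: hom1_def\<close>)
  then show ?thesis unfolding whiskR_def vcomp_id_left[OF f] .
qed

lemma whiskL_vcomp:
  assumes "hom2 A \<phi> b b1" "hom2 A \<psi> b1 b2" "hom1 A f (Cod A b) Z"
  shows "whiskL A f (VComp A \<psi> \<phi>) = VComp A (whiskL A f \<psi>) (whiskL A f \<phi>)"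
proof -
  have f: "hom2 A (Id2 A f) f f" using assms(3) id2_hom hom1_arr by blast
  have "HComp A (VComp A (Id2 A f) (Id2 A f)) (VComp A \<psi> \<phi>) =
        VComp A (HComp A (Id2 A f) \<psi>) (HComp A (Id2 A f) \<phi>)"
    by (rule interchange[OF assms(1,2) f f]) (use assms(3) in \<open>simp add: hom1_def\<close>)
  then show ?thesis unfolding whiskL_def vcomp_id_left[OF f] .
qed

lemma iso2I: "hom2 A \<Psi> b b' \<Longrightarrow> hom2 A \<Psi>' b' b \<Longrightarrow> VComp A \<Psi>' \<Psi> = Id2 A b \<Longrightarrow>
   VComp A \<Psi> \<Psi>' = Id2 A b' \<Longrightarrow> iso2 A \<Psi>"
  unfolding iso2_def hom2_def by (intro conjI exI[of _ \<Psi>']) simp_all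

lemma iso2E:
  assumes "iso2 A \<Psi>" "hom2 A \<Psi> b b'"
  obtains \<Psi>' where "hom2 A \<Psi>' b' b" "VComp A \<Psi>' \<Psi> = Id2 A b" "VComp A \<Psi> \<Psi>' = Id2 A b'"
  using assms unfolding iso2_def hom2_def by auto

lemma iso2_id2: "f \<in> Arr A \<Longrightarrow> iso2 A (Id2 A f)"
  by (rule iso2I[OF id2_hom id2_hom vcomp_id_left[OF id2_hom] vcomp_id_left[OF id2_hom]])

lemma inverse2_unique:
  assumes "hom2 A \<Psi> b b'" "hom2 A \<Phi> b' b" "hom2 A \<Phi>' b' b"
    and "VComp A \<Phi> \<Psi> = Id2 A b" "VComp A \<Psi> \<Phi>' = Id2 A b'"
  shows "\<Phi> = \<Phi>'"
proof -
  have "\<Phi> = VComp A \<Phi> (VComp A \<Psi> \<Phi>')" using vcomp_id_right[OF assms(2)] assms(5) by simp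
  also have "\<dots> = VComp A (VComp A \<Phi> \<Psi>) \<Phi>'" by (rule vcomp_assoc[OF assms(3,1,2)])
  finally show ?thesis using assms(4) vcomp_id_left[OF assms(3)] by simp
qed

lemma iso2_whiskR:
  assumes "iso2 A \<Psi>" "hom2 A \<Psi> b b'" "hom1 A f X (Dom A b)"
  shows "iso2 A (whiskR A \<Psi> f)"
proof -
  obtain \<Psi>' where inv: "hom2 A \<Psi>' b' b" "VComp A \<Psi>' \<Psi> = Id2 A b" "VComp A \<Psi> \<Psi>' = Id2 A b'"
    using iso2E[OF assms(1,2)] .
  have b: "hom1 A b (Dom A b) (Cod A b)" "hom1 A b' (Dom A b) (Cod A b)"
    using hom2_parallel[OF assms(2)] by (auto simp: hom1_def)
  have f': "hom1 A f X (Dom A b')" using assms(3) b by (simp add: hom1_def)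
  show ?thesis
  proof (rule iso2I[OF whiskR_hom[OF assms(2,3)] whiskR_hom[OF inv(1) f']])
    show "VComp A (whiskR A \<Psi>' f) (whiskR A \<Psi> f) = Id2 A (Comp A b f)"
      using whiskR_vcomp[OF assms(2) inv(1) assms(3)] inv(2) whiskR_id2[OF b(1) assms(3)] by simp
    show "VComp A (whiskR A \<Psi> f) (whiskR A \<Psi>' f) = Id2 A (Comp A b' f)"
      using whiskR_vcomp[OF inv(1) assms(2) f'] inv(3) whiskR_id2[OF b(2) assms(3)] by simp
  qed
qed

lemma iso2_whiskL:
  assumes "iso2 A \<Psi>" "hom2 A \<Psi> b b'" "hom1 A f (Cod A b) Z"
  shows "iso2 A (whiskL A f \<Psi>)"
proof -
  obtain \<Psi>' where inv: "hom2 A \<Psi>' b' b" "VComp A \<Psi>' \<Psi> = Id2 A b" "VComp A \<Psi> \<Psi>' = Id2 A b'"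
    using iso2E[OF assms(1,2)] .
  have b: "hom1 A b (Dom A b) (Cod A b)" "hom1 A b' (Dom A b) (Cod A b)"
    using hom2_parallel[OF assms(2)] by (auto simp: hom1_def)
  have f': "hom1 A f (Cod A b') Z" using assms(3) b by (simp add: hom1_def)
  show ?thesis
  proof (rule iso2I[OF whiskL_hom[OF assms(2,3)] whiskL_hom[OF inv(1) f']])
    show "VComp A (whiskL A f \<Psi>') (whiskL A f \<Psi>) = Id2 A (Comp A f b)"
      using whiskL_vcomp[OF assms(2) inv(1) assms(3)] inv(2) whiskL_id2[OF b(1) assms(3)] by simp
    show "VComp A (whiskL A f \<Psi>) (whiskL A f \<Psi>') = Id2 A (Comp A f b')"
      using whiskL_vcomp[OF inv(1) assms(2) f'] inv(3) whiskL_id2[OF b(2) assms(3)] by simp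
  qed
qed

lemma inverse_whisker_square:
  assumes \<Psi>: "hom2 A \<Psi> b b'" "hom2 A \<Psi>' b' b" "VComp A \<Psi>' \<Psi> = Id2 A b" "VComp A \<Psi> \<Psi>' = Id2 A b'"
    and \<Phi>: "hom2 A \<Phi> c c'" "hom2 A \<Phi>' c' c" "VComp A \<Phi>' \<Phi> = Id2 A c" "VComp A \<Phi> \<Phi>' = Id2 A c'"
    and f: "hom1 A f X (Dom A b)" and g: "hom1 A g (Cod A c) Z"
    and sq: "Comp A b f = Comp A g c" "Comp A b' f = Comp A g c'"
    and eq: "whiskR A \<Psi> f = whiskL A g \<Phi>"
  shows "whiskR A \<Psi>' f = whiskL A g \<Phi>'"
proof -
  have b: "hom1 A b (Dom A b) (Cod A b)" "hom1 A b' (Dom A b) (Cod A b)"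
    using hom2_parallel[OF \<Psi>(1)] by (auto simp: hom1_def)
  have c: "hom1 A c (Dom A c) (Cod A c)" "hom1 A c' (Dom A c) (Cod A c)"
    using hom2_parallel[OF \<Phi>(1)] by (auto simp: hom1_def)
  have f': "hom1 A f X (Dom A b')" and g': "hom1 A g (Cod A c') Z"
    using f g b c by (auto simp: hom1_def)
  have "VComp A (whiskR A \<Psi>' f) (whiskR A \<Psi> f) = Id2 A (Comp A b f)"
    using whiskR_vcomp[OF \<Psi>(1,2) f] \<Psi>(3) whiskR_id2[OF b(1) f] by simp
  moreover have "VComp A (whiskR A \<Psi> f) (whiskL A g \<Phi>') = Id2 A (Comp A b' f)"
    using eq whiskL_vcomp[OF \<Phi>(2,1) g'] \<Phi>(4) whiskL_id2[OF c(2) g] sq(2) by simp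
  moreover have "hom2 A (whiskL A g \<Phi>') (Comp A b' f) (Comp A b f)"
    using whiskL_hom[OF \<Phi>(2) g'] sq by simp
  ultimately show ?thesis
    using inverse2_unique[OF whiskR_hom[OF \<Psi>(1) f] whiskR_hom[OF \<Psi>(2) f']] by blast
qed

end

section \<open>Lifting properties of an enhanced factorization system\<close>

definition iso_filler ::
  "('o,'a,'c,'e) twocat_scheme \<Rightarrow> 'a \<Rightarrow> 'a \<Rightarrow> 'a \<Rightarrow> 'a \<Rightarrow> 'c \<Rightarrow> 'a \<Rightarrow> 'c \<Rightarrow> bool" where
  "iso_filler A \<epsilon> \<mu> \<alpha> \<alpha>' \<Psi> \<delta> \<Psi>' \<longleftrightarrow> hom1 A \<delta> (Cod A \<epsilon>) (Dom A \<mu>) \<and> hom2 A \<Psi>' \<alpha>' (Comp A \<mu> \<delta>) \<and>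
     iso2 A \<Psi>' \<and> Comp A \<delta> \<epsilon> = \<alpha> \<and> whiskR A \<Psi>' \<epsilon> = \<Psi>"

locale enhanced_fs_2epi = two_cat D for D :: "('o,'a,'c) twocat" +
  fixes E M :: "'a set"
  assumes enhanced_fs: "enhanced_fs D E M"
    and E_two_epi: "\<forall>\<epsilon>\<in>E. two_epi D \<epsilon>"
begin

lemma E_arr: "\<epsilon> \<in> E \<Longrightarrow> \<epsilon> \<in> Arr D"
  using enhanced_fs unfolding enhanced_fs_def by blast

lemma M_arr: "\<mu> \<in> M \<Longrightarrow> \<mu> \<in> Arr D"
  using enhanced_fs unfolding enhanced_fs_def by blast

lemma iso1_in_E: "iso1 D f \<Longrightarrow> f \<in> E"
  using enhanced_fs unfolding enhanced_fs_def by blast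

lemma iso1_in_M: "iso1 D f \<Longrightarrow> f \<in> M"
  using enhanced_fs unfolding enhanced_fs_def by blast

lemma factorization: "\<alpha> \<in> Arr D \<Longrightarrow> \<exists>\<epsilon>\<in>E. \<exists>\<mu>\<in>M. Cod D \<epsilon> = Dom D \<mu> \<and> \<alpha> = Comp D \<mu> \<epsilon>"
  using enhanced_fs unfolding enhanced_fs_def by (elim conjE) simp

lemma iso_filler_property:
  assumes "\<epsilon> \<in> E" "\<mu> \<in> M" "hom1 D \<alpha> (Dom D \<epsilon>) (Dom D \<mu>)" "hom1 D \<alpha>' (Cod D \<epsilon>) (Cod D \<mu>)"
    "hom2 D \<Psi> (Comp D \<alpha>' \<epsilon>) (Comp D \<mu> \<alpha>)" "iso2 D \<Psi>"
  shows "(\<exists>!(\<delta>, \<Psi>'). iso_filler D \<epsilon> \<mu> \<alpha> \<alpha>' \<Psi> \<delta> \<Psi>') \<and>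
    (\<forall>\<delta> \<Psi>'. iso_filler D \<epsilon> \<mu> \<alpha> \<alpha>' \<Psi> \<delta> \<Psi>' \<longrightarrow>
       \<Psi> = Id2 D (Comp D \<alpha>' \<epsilon>) \<longrightarrow> Comp D \<mu> \<delta> = \<alpha>' \<and> \<Psi>' = Id2 D \<alpha>')"
  using enhanced_fs assms unfolding enhanced_fs_def iso_filler_def Let_def by (elim conjE) blast

lemma two_cell_filler_ex1:
  assumes "\<epsilon> \<in> E" "\<mu> \<in> M"
    "hom1 D \<alpha>1 (Dom D \<epsilon>) (Dom D \<mu>)" "hom1 D \<alpha>2 (Dom D \<epsilon>) (Dom D \<mu>)"
    "hom1 D \<alpha>1' (Cod D \<epsilon>) (Cod D \<mu>)" "hom1 D \<alpha>2' (Cod D \<epsilon>) (Cod D \<mu>)"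
    "Comp D \<alpha>1' \<epsilon> = Comp D \<mu> \<alpha>1" "Comp D \<alpha>2' \<epsilon> = Comp D \<mu> \<alpha>2"
    "hom2 D \<Phi> \<alpha>1 \<alpha>2" "hom2 D \<Phi>' \<alpha>1' \<alpha>2'" "whiskL D \<mu> \<Phi> = whiskR D \<Phi>' \<epsilon>"
    "hom1 D \<delta>1 (Cod D \<epsilon>) (Dom D \<mu>)" "Comp D \<delta>1 \<epsilon> = \<alpha>1" "Comp D \<mu> \<delta>1 = \<alpha>1'"
    "hom1 D \<delta>2 (Cod D \<epsilon>) (Dom D \<mu>)" "Comp D \<delta>2 \<epsilon> = \<alpha>2" "Comp D \<mu> \<delta>2 = \<alpha>2'"
  shows "\<exists>!\<Delta>. hom2 D \<Delta> \<delta>1 \<delta>2 \<and> whiskR D \<Delta> \<epsilon> = \<Phi> \<and> whiskL D \<mu> \<Delta> = \<Phi>'"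
  using enhanced_fs assms unfolding enhanced_fs_def Let_def by (elim conjE) simp

lemma iso_filler_exists:
  assumes "\<epsilon> \<in> E" "\<mu> \<in> M" "hom1 D \<alpha> (Dom D \<epsilon>) (Dom D \<mu>)" "hom1 D \<alpha>' (Cod D \<epsilon>) (Cod D \<mu>)"
    "hom2 D \<Psi> (Comp D \<alpha>' \<epsilon>) (Comp D \<mu> \<alpha>)" "iso2 D \<Psi>"
  obtains \<delta> \<Psi>' where "iso_filler D \<epsilon> \<mu> \<alpha> \<alpha>' \<Psi> \<delta> \<Psi>'"
  using iso_filler_property[OF assms] by auto

lemma iso_filler_unique:
  assumes "\<epsilon> \<in> E" "\<mu> \<in> M" "hom1 D \<alpha> (Dom D \<epsilon>) (Dom D \<mu>)" "hom1 D \<alpha>' (Cod D \<epsilon>) (Cod D \<mu>)"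
    "hom2 D \<Psi> (Comp D \<alpha>' \<epsilon>) (Comp D \<mu> \<alpha>)" "iso2 D \<Psi>"
    and "iso_filler D \<epsilon> \<mu> \<alpha> \<alpha>' \<Psi> \<delta>1 \<Psi>1" "iso_filler D \<epsilon> \<mu> \<alpha> \<alpha>' \<Psi> \<delta>2 \<Psi>2"
  shows "\<delta>1 = \<delta>2 \<and> \<Psi>1 = \<Psi>2"
  using iso_filler_property[OF assms(1-6)] assms(7,8)
    by (metis (mono_tags, lifting) Pair_inject case_prodI)

lemma iso_filler_id2:
  assumes "\<epsilon> \<in> E" "\<mu> \<in> M" "hom1 D \<alpha> (Dom D \<epsilon>) (Dom D \<mu>)" "hom1 D \<alpha>' (Cod D \<epsilon>) (Cod D \<mu>)"
    "hom2 D \<Psi> (Comp D \<alpha>' \<epsilon>) (Comp D \<mu> \<alpha>)" "iso2 D \<Psi>"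
    and "iso_filler D \<epsilon> \<mu> \<alpha> \<alpha>' \<Psi> \<delta> \<Psi>'" "\<Psi> = Id2 D (Comp D \<alpha>' \<epsilon>)"
  shows "Comp D \<mu> \<delta> = \<alpha>' \<and> \<Psi>' = Id2 D \<alpha>'"
  using iso_filler_property[OF assms(1-6)] assms(7,8) by blast

lemma strict_filler_ex1:
  assumes \<epsilon>: "\<epsilon> \<in> E" and \<mu>: "\<mu> \<in> M"
    and \<alpha>: "hom1 D \<alpha> (Dom D \<epsilon>) (Dom D \<mu>)" and \<alpha>': "hom1 D \<alpha>' (Cod D \<epsilon>) (Cod D \<mu>)"
    and sq: "Comp D \<alpha>' \<epsilon> = Comp D \<mu> \<alpha>"
  shows "\<exists>!\<delta>. hom1 D \<delta> (Cod D \<epsilon>) (Dom D \<mu>) \<and> Comp D \<delta> \<epsilon> = \<alpha> \<and> Comp D \<mu> \<delta> = \<alpha>'"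
proof -
  have \<epsilon>': "hom1 D \<epsilon> (Dom D \<epsilon>) (Cod D \<epsilon>)" using E_arr[OF \<epsilon>] hom1I by blast
  have \<alpha>'\<epsilon>: "Comp D \<alpha>' \<epsilon> \<in> Arr D" using hom1_arr[OF comp_hom[OF \<epsilon>' \<alpha>']] .
  let ?I = "Id2 D (Comp D \<alpha>' \<epsilon>)"
  have I: "hom2 D ?I (Comp D \<alpha>' \<epsilon>) (Comp D \<mu> \<alpha>)" "iso2 D ?I"
    using id2_hom[OF \<alpha>'\<epsilon>] iso2_id2[OF \<alpha>'\<epsilon>] sq by simp_all
  note filler = \<epsilon> \<mu> \<alpha> \<alpha>' I
  obtain \<delta> \<Psi>' where P: "iso_filler D \<epsilon> \<mu> \<alpha> \<alpha>' ?I \<delta> \<Psi>'" using iso_filler_exists[OF filler] .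
  show ?thesis
  proof (rule ex1I[of _ \<delta>])
    show "hom1 D \<delta> (Cod D \<epsilon>) (Dom D \<mu>) \<and> Comp D \<delta> \<epsilon> = \<alpha> \<and> Comp D \<mu> \<delta> = \<alpha>'"
      using P iso_filler_id2[OF filler P] unfolding iso_filler_def by blast
  next
    fix \<delta>' assume \<delta>': "hom1 D \<delta>' (Cod D \<epsilon>) (Dom D \<mu>) \<and> Comp D \<delta>' \<epsilon> = \<alpha> \<and> Comp D \<mu> \<delta>' = \<alpha>'"
    have "iso_filler D \<epsilon> \<mu> \<alpha> \<alpha>' ?I \<delta>' (Id2 D \<alpha>')"
      unfolding iso_filler_def using \<delta>' id2_hom[OF hom1_arr[OF \<alpha>']] iso2_id2[OF hom1_arr[OF \<alpha>']]
        whiskR_id2[OF \<alpha>' \<epsilon>'] by simp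
    then show "\<delta>' = \<delta>" using iso_filler_unique[OF filler _ P] by blast
  qed
qed

lemma E_whiskR_cancel:
  assumes "\<epsilon> \<in> E" "hom2 D \<Psi> \<beta> \<beta>'" "hom2 D \<Psi>' \<beta> \<beta>'" "Dom D \<beta> = Cod D \<epsilon>"
    "whiskR D \<Psi> \<epsilon> = whiskR D \<Psi>' \<epsilon>"
  shows "\<Psi> = \<Psi>'"
proof -
  have "hom1 D \<beta> (Cod D \<epsilon>) (Cod D \<beta>)" "hom1 D \<beta>' (Cod D \<epsilon>) (Cod D \<beta>)"
    using hom2_parallel[OF assms(2)] assms(4) by (auto simp: hom1_def)
  then show ?thesis using E_two_epi assms(1,2,3,5) unfolding two_epi_def by blast
qed

end

section \<open>The functor 2-category\<close>

locale functor_2cat = C: two_cat C + D: two_cat D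
  for C :: "('o1,'a1,'c1) twocat" and D :: "('o2,'a2,'c2) twocat"
begin

abbreviation DC where "DC \<equiv> functor_cat C D"

lemma functor_cat_simps [simp]:
  "Obj DC = {F. two_functor C D F}" "Arr DC = {\<eta>. two_nat C D \<eta>}"
  "Cell DC = {\<Gamma>. modification C D \<Gamma>}" "Dom DC = NSrc" "Cod DC = NTgt"
  "Comp DC = nat_comp C D" "Src DC = MSrc" "Tgt DC = MTgt"
  by (simp_all add: functor_cat_def)

lemma functor_cat_Id1: "Id1 DC F = \<lparr> NSrc = F, NTgt = F,
    NCmp = (\<lambda>X. if X \<in> Obj C then Id1 D (FO F X) else undefined) \<rparr>"
  by (simp add: functor_cat_def)

lemma functor_cat_Id2: "Id2 DC \<eta> = \<lparr> MSrc = \<eta>, MTgt = \<eta>,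
    MCmp = (\<lambda>X. if X \<in> Obj C then Id2 D (NCmp \<eta> X) else undefined) \<rparr>"
  by (simp add: functor_cat_def)

lemma functor_cat_VComp: "VComp DC \<Delta> \<Gamma> = \<lparr> MSrc = MSrc \<Gamma>, MTgt = MTgt \<Delta>,
    MCmp = (\<lambda>X. if X \<in> Obj C then VComp D (MCmp \<Delta> X) (MCmp \<Gamma> X) else undefined) \<rparr>"
  by (simp add: functor_cat_def)

lemma hom1_functor_cat: "hom1 DC \<eta> F G \<longleftrightarrow> two_nat C D \<eta> \<and> NSrc \<eta> = F \<and> NTgt \<eta> = G"
  by (simp add: hom1_def)

lemma hom2_functor_cat: "hom2 DC \<Gamma> \<eta> \<eta>' \<longleftrightarrow> modification C D \<Gamma> \<and> MSrc \<Gamma> = \<eta> \<and> MTgt \<Gamma> = \<eta>'"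
  by (simp add: hom2_def)

lemma nat_comp_simps [simp]:
  "NSrc (nat_comp C D \<beta> \<alpha>) = NSrc \<alpha>" "NTgt (nat_comp C D \<beta> \<alpha>) = NTgt \<beta>"
  "X \<in> Obj C \<Longrightarrow> NCmp (nat_comp C D \<beta> \<alpha>) X = Comp D (NCmp \<beta> X) (NCmp \<alpha> X)"
  by (simp_all add: nat_comp_def)

lemma whiskR_functor_cat: "whiskR DC \<Psi> \<epsilon> =
   \<lparr> MSrc = nat_comp C D (MSrc \<Psi>) \<epsilon>, MTgt = nat_comp C D (MTgt \<Psi>) \<epsilon>,
     MCmp = (\<lambda>X. if X \<in> Obj C then whiskR D (MCmp \<Psi> X) (NCmp \<epsilon> X) else undefined) \<rparr>"
  by (auto simp: whiskR_def functor_cat_def fun_eq_iff)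

lemma whiskL_functor_cat: "whiskL DC \<mu> \<Phi> =
   \<lparr> MSrc = nat_comp C D \<mu> (MSrc \<Phi>), MTgt = nat_comp C D \<mu> (MTgt \<Phi>),
     MCmp = (\<lambda>X. if X \<in> Obj C then whiskL D (NCmp \<mu> X) (MCmp \<Phi> X) else undefined) \<rparr>"
  by (auto simp: whiskL_def functor_cat_def fun_eq_iff)

context
  fixes F assumes F: "two_functor C D F"
begin

lemma two_functor_hom1: "hom1 C f X Y \<Longrightarrow> hom1 D (FA F f) (FO F X) (FO F Y)"
  using F unfolding two_functor_def hom1_def by blast

lemma two_functor_id1: "X \<in> Obj C \<Longrightarrow> FA F (Id1 C X) = Id1 D (FO F X)"
  using F unfolding two_functor_def by blast

lemma two_functor_comp: "f \<in> Arr C \<Longrightarrow> g \<in> Arr C \<Longrightarrow> Cod C f = Dom C g \<Longrightarrow>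
    FA F (Comp C g f) = Comp D (FA F g) (FA F f)"
  using F unfolding two_functor_def by blast

lemma two_functor_hom2: "hom2 C \<phi> f g \<Longrightarrow> hom2 D (FC F \<phi>) (FA F f) (FA F g)"
  using F unfolding two_functor_def hom2_def by blast

lemma two_functor_id2: "f \<in> Arr C \<Longrightarrow> FC F (Id2 C f) = Id2 D (FA F f)"
  using F unfolding two_functor_def by blast

lemma two_functor_vcomp: "\<phi> \<in> Cell C \<Longrightarrow> \<psi> \<in> Cell C \<Longrightarrow> Tgt C \<phi> = Src C \<psi> \<Longrightarrow>
    FC F (VComp C \<psi> \<phi>) = VComp D (FC F \<psi>) (FC F \<phi>)"
  using F unfolding two_functor_def by blast

lemma two_functor_hcomp: "\<phi> \<in> Cell C \<Longrightarrow> \<psi> \<in> Cell C \<Longrightarrow> Cod C (Src C \<phi>) = Dom C (Src C \<psi>) \<Longrightarrow>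
    FC F (HComp C \<psi> \<phi>) = HComp D (FC F \<psi>) (FC F \<phi>)"
  using F unfolding two_functor_def by blast

end

context
  fixes \<eta> assumes \<eta>: "two_nat C D \<eta>"
begin

lemma two_nat_src: "two_functor C D (NSrc \<eta>)"
  using \<eta> unfolding two_nat_def by blast

lemma two_nat_tgt: "two_functor C D (NTgt \<eta>)"
  using \<eta> unfolding two_nat_def by blast

lemma two_nat_undefined: "X \<notin> Obj C \<Longrightarrow> NCmp \<eta> X = undefined"
  using \<eta> unfolding two_nat_def by blast

lemma two_nat_hom1: "X \<in> Obj C \<Longrightarrow> hom1 D (NCmp \<eta> X) (FO (NSrc \<eta>) X) (FO (NTgt \<eta>) X)"
  using \<eta> unfolding two_nat_def by blast

lemma two_nat_naturality:
  "hom1 C f X Y \<Longrightarrow> Comp D (FA (NTgt \<eta>) f) (NCmp \<eta> X) = Comp D (NCmp \<eta> Y) (FA (NSrc \<eta>) f)"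
  using \<eta> unfolding two_nat_def hom1_def by blast

lemma two_nat_2naturality: "hom2 C \<phi> f g \<Longrightarrow> hom1 C f X Y \<Longrightarrow>
    whiskL D (NCmp \<eta> Y) (FC (NSrc \<eta>) \<phi>) = whiskR D (FC (NTgt \<eta>) \<phi>) (NCmp \<eta> X)"
  using \<eta> unfolding two_nat_def hom1_def hom2_def by blast

end

context
  fixes \<Gamma> assumes \<Gamma>: "modification C D \<Gamma>"
begin

lemma modification_src: "two_nat C D (MSrc \<Gamma>)"
  using \<Gamma> unfolding modification_def by blast

lemma modification_tgt: "two_nat C D (MTgt \<Gamma>)"
  using \<Gamma> unfolding modification_def by blast

lemma modification_parallel:
  "NSrc (MSrc \<Gamma>) = NSrc (MTgt \<Gamma>)" "NTgt (MSrc \<Gamma>) = NTgt (MTgt \<Gamma>)"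
  using \<Gamma> unfolding modification_def by blast+

lemma modification_undefined: "X \<notin> Obj C \<Longrightarrow> MCmp \<Gamma> X = undefined"
  using \<Gamma> unfolding modification_def by blast

lemma modification_hom2: "X \<in> Obj C \<Longrightarrow> hom2 D (MCmp \<Gamma> X) (NCmp (MSrc \<Gamma>) X) (NCmp (MTgt \<Gamma>) X)"
  using \<Gamma> unfolding modification_def by blast

lemma modification_naturality: "hom1 C f X Y \<Longrightarrow>
    whiskR D (MCmp \<Gamma> Y) (FA (NSrc (MSrc \<Gamma>)) f) = whiskL D (FA (NTgt (MSrc \<Gamma>)) f) (MCmp \<Gamma> X)"
  using \<Gamma> unfolding modification_def hom1_def by blast

end

lemma two_nat_eqI:
  assumes "two_nat C D \<eta>" "two_nat C D \<eta>'" "NSrc \<eta> = NSrc \<eta>'" "NTgt \<eta> = NTgt \<eta>'"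
    "\<And>X. X \<in> Obj C \<Longrightarrow> NCmp \<eta> X = NCmp \<eta>' X"
  shows "\<eta> = \<eta>'"
proof (rule tnat.equality)
  show "NCmp \<eta> = NCmp \<eta>'"
  proof
    fix X show "NCmp \<eta> X = NCmp \<eta>' X"
      by (cases "X \<in> Obj C") (use assms two_nat_undefined in auto)
  qed
qed (use assms in auto)

lemma modification_eqI:
  assumes "modification C D \<Gamma>" "modification C D \<Gamma>'" "MSrc \<Gamma> = MSrc \<Gamma>'" "MTgt \<Gamma> = MTgt \<Gamma>'"
    "\<And>X. X \<in> Obj C \<Longrightarrow> MCmp \<Gamma> X = MCmp \<Gamma>' X"
  shows "\<Gamma> = \<Gamma>'"
proof (rule tmod.equality)
  show "MCmp \<Gamma> = MCmp \<Gamma>'"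
  proof
    fix X show "MCmp \<Gamma> X = MCmp \<Gamma>' X"
      by (cases "X \<in> Obj C") (use assms modification_undefined in auto)
  qed
qed (use assms in auto)

lemma pointwise_classD:
  "\<eta> \<in> pointwise_class C D K \<Longrightarrow> two_nat C D \<eta>"
  "\<eta> \<in> pointwise_class C D K \<Longrightarrow> X \<in> Obj C \<Longrightarrow> NCmp \<eta> X \<in> K"
  by (auto simp: pointwise_class_def)

lemma hom1_functor_cat_component:
  "hom1 DC \<eta> F G \<Longrightarrow> X \<in> Obj C \<Longrightarrow> hom1 D (NCmp \<eta> X) (FO F X) (FO G X)"
  using two_nat_hom1 by (auto simp: hom1_functor_cat)

lemma hom2_functor_cat_component:
  "hom2 DC \<Gamma> \<eta> \<eta>' \<Longrightarrow> X \<in> Obj C \<Longrightarrow> hom2 D (MCmp \<Gamma> X) (NCmp \<eta> X) (NCmp \<eta>' X)"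
  using modification_hom2 by (auto simp: hom2_functor_cat)

context
  fixes \<alpha> \<beta>
  assumes \<alpha>: "two_nat C D \<alpha>" and \<beta>: "two_nat C D \<beta>" and \<alpha>\<beta>: "NTgt \<alpha> = NSrc \<beta>"
begin

lemma nat_comp_naturality:
  assumes f: "hom1 C f X Y"
  shows "Comp D (FA (NTgt \<beta>) f) (Comp D (NCmp \<beta> X) (NCmp \<alpha> X)) =
    Comp D (Comp D (NCmp \<beta> Y) (NCmp \<alpha> Y)) (FA (NSrc \<alpha>) f)"
proof -
  have X: "X \<in> Obj C" and Y: "Y \<in> Obj C" using C.hom1_obj[OF f] by auto
  have \<alpha>X: "hom1 D (NCmp \<alpha> X) (FO (NSrc \<alpha>) X) (FO (NSrc \<beta>) X)"
    and \<alpha>Y: "hom1 D (NCmp \<alpha> Y) (FO (NSrc \<alpha>) Y) (FO (NSrc \<beta>) Y)"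
    using two_nat_hom1[OF \<alpha> X] two_nat_hom1[OF \<alpha> Y] \<alpha>\<beta> by simp_all
  have \<beta>X: "hom1 D (NCmp \<beta> X) (FO (NSrc \<beta>) X) (FO (NTgt \<beta>) X)"
    and \<beta>Y: "hom1 D (NCmp \<beta> Y) (FO (NSrc \<beta>) Y) (FO (NTgt \<beta>) Y)"
    using two_nat_hom1[OF \<beta> X] two_nat_hom1[OF \<beta> Y] .
  note Ff = two_functor_hom1[OF two_nat_src[OF \<alpha>] f]
   and Gf = two_functor_hom1[OF two_nat_src[OF \<beta>] f]
   and Hf = two_functor_hom1[OF two_nat_tgt[OF \<beta>] f]
  have "Comp D (FA (NTgt \<beta>) f) (Comp D (NCmp \<beta> X) (NCmp \<alpha> X))
      = Comp D (Comp D (FA (NTgt \<beta>) f) (NCmp \<beta> X)) (NCmp \<alpha> X)" by (rule D.comp_assoc[OF \<alpha>X \<beta>X Hf])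
  also have "\<dots> = Comp D (NCmp \<beta> Y) (Comp D (FA (NSrc \<beta>) f) (NCmp \<alpha> X))"
    using two_nat_naturality[OF \<beta> f] D.comp_assoc[OF \<alpha>X Gf \<beta>Y] by simp
  also have "\<dots> = Comp D (Comp D (NCmp \<beta> Y) (NCmp \<alpha> Y)) (FA (NSrc \<alpha>) f)"
    using two_nat_naturality[OF \<alpha> f] \<alpha>\<beta> D.comp_assoc[OF Ff \<alpha>Y \<beta>Y] by simp
  finally show ?thesis .
qed

lemma nat_comp_2naturality:
  assumes \<phi>: "hom2 C \<phi> f g" and f: "hom1 C f X Y"
  shows "whiskL D (Comp D (NCmp \<beta> Y) (NCmp \<alpha> Y)) (FC (NSrc \<alpha>) \<phi>) =
    whiskR D (FC (NTgt \<beta>) \<phi>) (Comp D (NCmp \<beta> X) (NCmp \<alpha> X))"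
proof -
  have X: "X \<in> Obj C" and Y: "Y \<in> Obj C" using C.hom1_obj[OF f] by auto
  have \<alpha>X: "hom1 D (NCmp \<alpha> X) (FO (NSrc \<alpha>) X) (FO (NSrc \<beta>) X)"
    and \<alpha>Y: "hom1 D (NCmp \<alpha> Y) (FO (NSrc \<alpha>) Y) (FO (NSrc \<beta>) Y)"
    using two_nat_hom1[OF \<alpha> X] two_nat_hom1[OF \<alpha> Y] \<alpha>\<beta> by simp_all
  have \<beta>X: "hom1 D (NCmp \<beta> X) (FO (NSrc \<beta>) X) (FO (NTgt \<beta>) X)"
    and \<beta>Y: "hom1 D (NCmp \<beta> Y) (FO (NSrc \<beta>) Y) (FO (NTgt \<beta>) Y)"
    using two_nat_hom1[OF \<beta> X] two_nat_hom1[OF \<beta> Y] .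
  note F\<phi> = two_functor_hom2[OF two_nat_src[OF \<alpha>] \<phi>]
   and G\<phi> = two_functor_hom2[OF two_nat_src[OF \<beta>] \<phi>]
   and H\<phi> = two_functor_hom2[OF two_nat_tgt[OF \<beta>] \<phi>]
  note Ff = two_functor_hom1[OF two_nat_src[OF \<alpha>] f]
   and Gf = two_functor_hom1[OF two_nat_src[OF \<beta>] f]
   and Hf = two_functor_hom1[OF two_nat_tgt[OF \<beta>] f]
  have "whiskL D (Comp D (NCmp \<beta> Y) (NCmp \<alpha> Y)) (FC (NSrc \<alpha>) \<phi>)
      = whiskL D (NCmp \<beta> Y) (whiskL D (NCmp \<alpha> Y) (FC (NSrc \<alpha>) \<phi>))"
    by (rule D.whiskL_whiskL[OF F\<phi> _ \<beta>Y, symmetric]) (use \<alpha>Y Ff in \<open>simp add: hom1_def\<close>)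
  also have "\<dots> = whiskL D (NCmp \<beta> Y) (whiskR D (FC (NSrc \<beta>) \<phi>) (NCmp \<alpha> X))"
    using two_nat_2naturality[OF \<alpha> \<phi> f] \<alpha>\<beta> by simp
  also have "\<dots> = whiskR D (whiskL D (NCmp \<beta> Y) (FC (NSrc \<beta>) \<phi>)) (NCmp \<alpha> X)"
    by (rule D.whiskL_whiskR[OF G\<phi>]) (use \<alpha>X \<beta>Y Gf in \<open>simp_all add: hom1_def\<close>)
  also have "\<dots> = whiskR D (whiskR D (FC (NTgt \<beta>) \<phi>) (NCmp \<beta> X)) (NCmp \<alpha> X)"
    using two_nat_2naturality[OF \<beta> \<phi> f] by simp
  also have "\<dots> = whiskR D (FC (NTgt \<beta>) \<phi>) (Comp D (NCmp \<beta> X) (NCmp \<alpha> X))"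
    by (rule D.whiskR_whiskR[OF H\<phi> _ \<alpha>X]) (use \<beta>X Hf in \<open>simp add: hom1_def\<close>)
  finally show ?thesis .
qed

lemma two_nat_nat_comp: "two_nat C D (nat_comp C D \<beta> \<alpha>)"
  unfolding two_nat_def
proof (intro conjI ballI allI impI)
  show "two_functor C D (NSrc (nat_comp C D \<beta> \<alpha>))" "two_functor C D (NTgt (nat_comp C D \<beta> \<alpha>))"
    using two_nat_src[OF \<alpha>] two_nat_tgt[OF \<beta>] by simp_all
  show "NCmp (nat_comp C D \<beta> \<alpha>) X = undefined" if "X \<notin> Obj C" for X
    using that by (simp add: nat_comp_def)
  show "hom1 D (NCmp (nat_comp C D \<beta> \<alpha>) X) (FO (NSrc (nat_comp C D \<beta> \<alpha>)) X)
      (FO (NTgt (nat_comp C D \<beta> \<alpha>)) X)" if X: "X \<in> Obj C" for X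
    using D.comp_hom[OF two_nat_hom1[OF \<alpha> X]] two_nat_hom1[OF \<beta> X] \<alpha>\<beta> X by simp
  show "Comp D (FA (NTgt (nat_comp C D \<beta> \<alpha>)) f) (NCmp (nat_comp C D \<beta> \<alpha>) (Dom C f)) =
      Comp D (NCmp (nat_comp C D \<beta> \<alpha>) (Cod C f)) (FA (NSrc (nat_comp C D \<beta> \<alpha>)) f)"
    if "f \<in> Arr C" for f
    using nat_comp_naturality[OF C.hom1I[OF that]] C.dom_cod_obj[OF that] by simp
  show "whiskL D (NCmp (nat_comp C D \<beta> \<alpha>) (Cod C (Src C \<phi>))) (FC (NSrc (nat_comp C D \<beta> \<alpha>)) \<phi>) =
      whiskR D (FC (NTgt (nat_comp C D \<beta> \<alpha>)) \<phi>) (NCmp (nat_comp C D \<beta> \<alpha>) (Dom C (Src C \<phi>)))"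
    if "\<phi> \<in> Cell C" for \<phi>
  proof -
    have "hom2 C \<phi> (Src C \<phi>) (Tgt C \<phi>)" and f: "hom1 C (Src C \<phi>) (Dom C (Src C \<phi>)) (Cod C (Src C \<phi>))"
      using C.cell_hom[OF that] by auto
    then show ?thesis using nat_comp_2naturality C.hom1_obj[OF f] by simp
  qed
qed

end

lemma iso2_functor_cat_component:
  assumes "iso2 DC \<Gamma>" and X: "X \<in> Obj C"
  shows "iso2 D (MCmp \<Gamma> X)"
proof -
  from assms(1) obtain \<Gamma>' where \<Gamma>: "modification C D \<Gamma>" and \<Gamma>': "hom2 DC \<Gamma>' (MTgt \<Gamma>) (MSrc \<Gamma>)"
    and inv: "VComp DC \<Gamma>' \<Gamma> = Id2 DC (MSrc \<Gamma>)" "VComp DC \<Gamma> \<Gamma>' = Id2 DC (MTgt \<Gamma>)"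
    unfolding iso2_def by auto
  have "modification C D \<Gamma>'" "MSrc \<Gamma>' = MTgt \<Gamma>" "MTgt \<Gamma>' = MSrc \<Gamma>"
    using \<Gamma>' by (auto simp: hom2_functor_cat)
  moreover have "VComp D (MCmp \<Gamma>' X) (MCmp \<Gamma> X) = Id2 D (NCmp (MSrc \<Gamma>) X)"
    and "VComp D (MCmp \<Gamma> X) (MCmp \<Gamma>' X) = Id2 D (NCmp (MTgt \<Gamma>) X)"
    using arg_cong[OF inv(1), of "\<lambda>\<Delta>. MCmp \<Delta> X"] arg_cong[OF inv(2), of "\<lambda>\<Delta>. MCmp \<Delta> X"] X
    by (simp_all add: functor_cat_VComp functor_cat_Id2)
  ultimately show ?thesis
    using D.iso2I[OF modification_hom2[OF \<Gamma> X]] modification_hom2[of \<Gamma>' X] X by simp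
qed

lemma iso1_functor_cat_component:
  assumes "iso1 DC \<eta>" and X: "X \<in> Obj C"
  shows "iso1 D (NCmp \<eta> X)"
proof -
  from assms(1) obtain \<eta>' where \<eta>: "two_nat C D \<eta>" and \<eta>': "hom1 DC \<eta>' (NTgt \<eta>) (NSrc \<eta>)"
    and inv: "nat_comp C D \<eta>' \<eta> = Id1 DC (NSrc \<eta>)" "nat_comp C D \<eta> \<eta>' = Id1 DC (NTgt \<eta>)"
    unfolding iso1_def by auto
  have "hom1 D (NCmp \<eta>' X) (FO (NTgt \<eta>) X) (FO (NSrc \<eta>) X)"
    using two_nat_hom1[of \<eta>' X] \<eta>' X by (simp add: hom1_functor_cat)
  moreover have "Comp D (NCmp \<eta>' X) (NCmp \<eta> X) = Id1 D (FO (NSrc \<eta>) X)"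
    and "Comp D (NCmp \<eta> X) (NCmp \<eta>' X) = Id1 D (FO (NTgt \<eta>) X)"
    using arg_cong[OF inv(1), of "\<lambda>\<nu>. NCmp \<nu> X"] arg_cong[OF inv(2), of "\<lambda>\<nu>. NCmp \<nu> X"] X
    by (simp_all add: functor_cat_Id1)
  ultimately show ?thesis
    using two_nat_hom1[OF \<eta> X] unfolding iso1_def by (auto simp: hom1_def)
qed

lemma modification_pointwise_inverse:
  assumes \<Gamma>: "modification C D \<Gamma>"
    and inv: "\<And>X. X \<in> Obj C \<Longrightarrow> hom2 D (\<Gamma>' X) (NCmp (MTgt \<Gamma>) X) (NCmp (MSrc \<Gamma>) X) \<and>
      VComp D (\<Gamma>' X) (MCmp \<Gamma> X) = Id2 D (NCmp (MSrc \<Gamma>) X) \<and>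
      VComp D (MCmp \<Gamma> X) (\<Gamma>' X) = Id2 D (NCmp (MTgt \<Gamma>) X)"
  shows "modification C D
    \<lparr> MSrc = MTgt \<Gamma>, MTgt = MSrc \<Gamma>, MCmp = (\<lambda>X. if X \<in> Obj C then \<Gamma>' X else undefined) \<rparr>"
  unfolding modification_def tmod.simps
proof (intro conjI ballI allI impI)
  show "two_nat C D (MTgt \<Gamma>)" "two_nat C D (MSrc \<Gamma>)"
    using modification_src[OF \<Gamma>] modification_tgt[OF \<Gamma>] by simp_all
  show "NSrc (MTgt \<Gamma>) = NSrc (MSrc \<Gamma>)" "NTgt (MTgt \<Gamma>) = NTgt (MSrc \<Gamma>)"
    using modification_parallel[OF \<Gamma>] by simp_all
  show "(if X \<in> Obj C then \<Gamma>' X else undefined) = undefined" if "X \<notin> Obj C" for X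
    using that by simp
  show "hom2 D (if X \<in> Obj C then \<Gamma>' X else undefined) (NCmp (MTgt \<Gamma>) X) (NCmp (MSrc \<Gamma>) X)"
    if "X \<in> Obj C" for X
    using inv[OF that] that by simp
next
  fix f assume "f \<in> Arr C"
  then have f: "hom1 C f (Dom C f) (Cod C f)" by (rule C.hom1I)
  let ?X = "Dom C f" and ?Y = "Cod C f" and ?\<sigma> = "MSrc \<Gamma>"
  have X: "?X \<in> Obj C" and Y: "?Y \<in> Obj C" using C.hom1_obj[OF f] by auto
  note \<sigma> = modification_src[OF \<Gamma>]
  have Ff: "hom1 D (FA (NSrc ?\<sigma>) f) (FO (NSrc ?\<sigma>) ?X) (Dom D (NCmp ?\<sigma> ?Y))"
    using two_functor_hom1[OF two_nat_src[OF \<sigma>] f] two_nat_hom1[OF \<sigma> Y] by (simp add: hom1_def)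
  have Gf: "hom1 D (FA (NTgt ?\<sigma>) f) (Cod D (NCmp ?\<sigma> ?X)) (FO (NTgt ?\<sigma>) ?Y)"
    using two_functor_hom1[OF two_nat_tgt[OF \<sigma>] f] two_nat_hom1[OF \<sigma> X] by (simp add: hom1_def)
  have "whiskR D (\<Gamma>' ?Y) (FA (NSrc ?\<sigma>) f) = whiskL D (FA (NTgt ?\<sigma>) f) (\<Gamma>' ?X)"
    using D.inverse_whisker_square[OF modification_hom2[OF \<Gamma> Y] _ _ _
        modification_hom2[OF \<Gamma> X] _ _ _ Ff Gf _ _ modification_naturality[OF \<Gamma> f]]
      inv[OF X] inv[OF Y] two_nat_naturality[OF \<sigma> f] two_nat_naturality[OF modification_tgt[OF \<Gamma>] f]
      modification_parallel[OF \<Gamma>] by simp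
  then show "whiskR D (if ?Y \<in> Obj C then \<Gamma>' ?Y else undefined) (FA (NSrc (MTgt \<Gamma>)) f) =
      whiskL D (FA (NTgt (MTgt \<Gamma>)) f) (if ?X \<in> Obj C then \<Gamma>' ?X else undefined)"
    using X Y modification_parallel[OF \<Gamma>] by simp
qed

lemma iso2_functor_catI:
  assumes \<Gamma>: "modification C D \<Gamma>" and iso: "\<And>X. X \<in> Obj C \<Longrightarrow> iso2 D (MCmp \<Gamma> X)"
  shows "iso2 DC \<Gamma>"
proof -
  have "\<forall>X\<in>Obj C. \<exists>\<Psi>. hom2 D \<Psi> (NCmp (MTgt \<Gamma>) X) (NCmp (MSrc \<Gamma>) X) \<and>
      VComp D \<Psi> (MCmp \<Gamma> X) = Id2 D (NCmp (MSrc \<Gamma>) X) \<and> VComp D (MCmp \<Gamma> X) \<Psi> = Id2 D (NCmp (MTgt \<Gamma>) X)"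
    using D.iso2E[OF iso modification_hom2[OF \<Gamma>]] by metis
  then obtain \<Gamma>' where inv: "\<And>X. X \<in> Obj C \<Longrightarrow> hom2 D (\<Gamma>' X) (NCmp (MTgt \<Gamma>) X) (NCmp (MSrc \<Gamma>) X) \<and>
      VComp D (\<Gamma>' X) (MCmp \<Gamma> X) = Id2 D (NCmp (MSrc \<Gamma>) X) \<and>
      VComp D (MCmp \<Gamma> X) (\<Gamma>' X) = Id2 D (NCmp (MTgt \<Gamma>) X)"
    by metis
  let ?inverse = "\<lparr> MSrc = MTgt \<Gamma>, MTgt = MSrc \<Gamma>, MCmp = (\<lambda>X. if X \<in> Obj C then \<Gamma>' X else undefined) \<rparr>"
  show ?thesis unfolding iso2_def
  proof (intro conjI exI[of _ ?inverse])
    show "\<Gamma> \<in> Cell DC" using \<Gamma> by simp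
    show "hom2 DC ?inverse (Tgt DC \<Gamma>) (Src DC \<Gamma>)"
      using modification_pointwise_inverse[OF \<Gamma> inv] by (simp add: hom2_functor_cat)
    show "VComp DC ?inverse \<Gamma> = Id2 DC (Src DC \<Gamma>)" "VComp DC \<Gamma> ?inverse = Id2 DC (Tgt DC \<Gamma>)"
      unfolding functor_cat_VComp functor_cat_Id2 using inv by (auto simp: fun_eq_iff)
  qed
qed

end

section \<open>Pointwise factorization on the functor 2-category\<close>

locale functor_cat_fs = functor_2cat C D + D: enhanced_fs_2epi D E M
  for C :: "('o1,'a1,'c1) twocat" and D :: "('o2,'a2,'c2) twocat" and E M :: "'a2 set"
begin

context
  fixes \<alpha> assumes \<alpha>: "two_nat C D \<alpha>"
begin

abbreviation factors_at where
  "factors_at X e m \<equiv> e \<in> E \<and> m \<in> M \<and> Cod D e = Dom D m \<and> NCmp \<alpha> X = Comp D m e"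

definition E_factor where "E_factor X = (SOME e. \<exists>m. factors_at X e m)"

definition M_factor where "M_factor X = (SOME m. factors_at X (E_factor X) m)"

definition image_obj where "image_obj X = (if X \<in> Obj C then Cod D (E_factor X) else undefined)"

lemma E_M_factorization: "X \<in> Obj C \<Longrightarrow> factors_at X (E_factor X) (M_factor X)"
  unfolding M_factor_def E_factor_def
  by (rule someI_ex, rule someI_ex)
    (use D.factorization[OF D.hom1_arr[OF two_nat_hom1[OF \<alpha>]]] in blast)

lemma E_factor_in_E: "X \<in> Obj C \<Longrightarrow> E_factor X \<in> E"
  using E_M_factorization by blast

lemma M_factor_in_M: "X \<in> Obj C \<Longrightarrow> M_factor X \<in> M"
  using E_M_factorization by blast

lemma factor_hom1:
  assumes X: "X \<in> Obj C"
  shows "hom1 D (E_factor X) (FO (NSrc \<alpha>) X) (image_obj X)"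
    "hom1 D (M_factor X) (image_obj X) (FO (NTgt \<alpha>) X)"
proof -
  note fX = E_M_factorization[OF X]
  have e: "hom1 D (E_factor X) (Dom D (E_factor X)) (Cod D (E_factor X))"
    and m: "hom1 D (M_factor X) (Cod D (E_factor X)) (Cod D (M_factor X))"
    using D.E_arr D.M_arr D.hom1I fX by metis+
  have "hom1 D (NCmp \<alpha> X) (Dom D (E_factor X)) (Cod D (M_factor X))"
    using D.comp_hom[OF e m] fX by simp
  then have "Dom D (E_factor X) = FO (NSrc \<alpha>) X" "Cod D (M_factor X) = FO (NTgt \<alpha>) X"
    using two_nat_hom1[OF \<alpha> X] by (auto simp: hom1_def)
  then show "hom1 D (E_factor X) (FO (NSrc \<alpha>) X) (image_obj X)"
    "hom1 D (M_factor X) (image_obj X) (FO (NTgt \<alpha>) X)"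
    using e m X by (auto simp: image_obj_def)
qed

abbreviation image_arr_spec where
  "image_arr_spec f \<delta> \<equiv> hom1 D \<delta> (image_obj (Dom C f)) (image_obj (Cod C f)) \<and>
    Comp D \<delta> (E_factor (Dom C f)) = Comp D (E_factor (Cod C f)) (FA (NSrc \<alpha>) f) \<and>
    Comp D (M_factor (Cod C f)) \<delta> = Comp D (FA (NTgt \<alpha>) f) (M_factor (Dom C f))"

definition image_arr where
  "image_arr f = (if f \<in> Arr C then (THE \<delta>. image_arr_spec f \<delta>) else undefined)"

lemma image_arr_spec_ex1:
  assumes "f \<in> Arr C"
  shows "\<exists>!\<delta>. image_arr_spec f \<delta>"
proof -
  let ?X = "Dom C f" and ?Y = "Cod C f" and ?F = "NSrc \<alpha>" and ?G = "NTgt \<alpha>"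
  have f: "hom1 C f ?X ?Y" using assms by (rule C.hom1I)
  have X: "?X \<in> Obj C" and Y: "?Y \<in> Obj C" using C.hom1_obj[OF f] by auto
  note Ff = two_functor_hom1[OF two_nat_src[OF \<alpha>] f]
    and Gf = two_functor_hom1[OF two_nat_tgt[OF \<alpha>] f]
  note eX = factor_hom1(1)[OF X] and mX = factor_hom1(2)[OF X]
    and eY = factor_hom1(1)[OF Y] and mY = factor_hom1(2)[OF Y]
  have "Comp D (Comp D (FA ?G f) (M_factor ?X)) (E_factor ?X) = Comp D (FA ?G f) (NCmp \<alpha> ?X)"
    using D.comp_assoc[OF eX mX Gf] E_M_factorization[OF X] by simp
  also have "\<dots> = Comp D (Comp D (M_factor ?Y) (E_factor ?Y)) (FA ?F f)"
    using two_nat_naturality[OF \<alpha> f] E_M_factorization[OF Y] by simp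
  finally have sq: "Comp D (Comp D (FA ?G f) (M_factor ?X)) (E_factor ?X) =
      Comp D (M_factor ?Y) (Comp D (E_factor ?Y) (FA ?F f))"
    using D.comp_assoc[OF Ff eY mY] by simp
  have "\<exists>!\<delta>. hom1 D \<delta> (Cod D (E_factor ?X)) (Dom D (M_factor ?Y)) \<and>
      Comp D \<delta> (E_factor ?X) = Comp D (E_factor ?Y) (FA ?F f) \<and>
      Comp D (M_factor ?Y) \<delta> = Comp D (FA ?G f) (M_factor ?X)"
    by (rule D.strict_filler_ex1[OF E_factor_in_E[OF X] M_factor_in_M[OF Y] _ _ sq])
      (use D.comp_hom[OF Ff eY] D.comp_hom[OF mX Gf] eX mX eY mY in \<open>simp_all add: hom1_def\<close>)
  then show ?thesis using eX mY by (simp add: hom1_def)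
qed

lemma image_arr_spec_holds: "f \<in> Arr C \<Longrightarrow> image_arr_spec f (image_arr f)"
  unfolding image_arr_def using theI'[OF image_arr_spec_ex1] by simp

lemma image_arr_unique: "f \<in> Arr C \<Longrightarrow> image_arr_spec f \<delta> \<Longrightarrow> image_arr f = \<delta>"
  using image_arr_spec_ex1 image_arr_spec_holds by blast

lemma image_arr_props:
  assumes "hom1 C f X Y"
  shows "hom1 D (image_arr f) (image_obj X) (image_obj Y)"
    "Comp D (image_arr f) (E_factor X) = Comp D (E_factor Y) (FA (NSrc \<alpha>) f)"
    "Comp D (M_factor Y) (image_arr f) = Comp D (FA (NTgt \<alpha>) f) (M_factor X)"
  using image_arr_spec_holds[of f] assms by (auto simp: hom1_def)

abbreviation image_cell_spec where
  "image_cell_spec \<phi> \<Delta> \<equiv> hom2 D \<Delta> (image_arr (Src C \<phi>)) (image_arr (Tgt C \<phi>)) \<and>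
    whiskR D \<Delta> (E_factor (Dom C (Src C \<phi>))) = whiskL D (E_factor (Cod C (Src C \<phi>))) (FC (NSrc \<alpha>) \<phi>) \<and>
    whiskL D (M_factor (Cod C (Src C \<phi>))) \<Delta> = whiskR D (FC (NTgt \<alpha>) \<phi>) (M_factor (Dom C (Src C \<phi>)))"

definition image_cell where
  "image_cell \<phi> = (if \<phi> \<in> Cell C then (THE \<Delta>. image_cell_spec \<phi> \<Delta>) else undefined)"

lemma image_cell_spec_ex1:
  assumes "\<phi> \<in> Cell C"
  shows "\<exists>!\<Delta>. image_cell_spec \<phi> \<Delta>"
proof -
  let ?f = "Src C \<phi>" and ?g = "Tgt C \<phi>" and ?F = "NSrc \<alpha>" and ?G = "NTgt \<alpha>"
  let ?X = "Dom C ?f" and ?Y = "Cod C ?f"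
  have \<phi>: "hom2 C \<phi> ?f ?g" and f: "hom1 C ?f ?X ?Y" and g: "hom1 C ?g ?X ?Y"
      using C.cell_hom[OF assms] by auto
  have X: "?X \<in> Obj C" and Y: "?Y \<in> Obj C" using C.hom1_obj[OF f] by auto
  note Ff = two_functor_hom1[OF two_nat_src[OF \<alpha>] f] and Fg = two_functor_hom1[OF two_nat_src[OF \<alpha>] g]
    and Gf = two_functor_hom1[OF two_nat_tgt[OF \<alpha>] f] and Gg = two_functor_hom1[OF two_nat_tgt[OF \<alpha>] g]
    and F\<phi> = two_functor_hom2[OF two_nat_src[OF \<alpha>] \<phi>] and G\<phi> = two_functor_hom2[OF two_nat_tgt[OF \<alpha>] \<phi>]
  note eX = factor_hom1(1)[OF X] and mX = factor_hom1(2)[OF X]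
    and eY = factor_hom1(1)[OF Y] and mY = factor_hom1(2)[OF Y]
  have eY': "hom1 D (E_factor ?Y) (Cod D (FA ?F ?f)) (image_obj ?Y)"
    and mX': "hom1 D (M_factor ?X) (image_obj ?X) (Dom D (FA ?G ?f))"
    using eY Ff mX Gf by (simp_all add: hom1_def)
  have square: "Comp D (Comp D (FA ?G h) (M_factor ?X)) (E_factor ?X) =
      Comp D (M_factor ?Y) (Comp D (E_factor ?Y) (FA ?F h))" if "hom1 C h ?X ?Y" for h
    using image_arr_props(2,3)[OF that] D.comp_assoc[OF eX mX two_functor_hom1[OF two_nat_tgt[OF \<alpha>] that]]
      D.comp_assoc[OF two_functor_hom1[OF two_nat_src[OF \<alpha>] that] eY mY]
      D.comp_assoc[OF eX image_arr_props(1)[OF that] mY] by simp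
  have "whiskL D (M_factor ?Y) (whiskL D (E_factor ?Y) (FC ?F \<phi>)) = whiskL D (NCmp \<alpha> ?Y) (FC ?F \<phi>)"
    using D.whiskL_whiskL[OF F\<phi> eY' mY] E_M_factorization[OF Y] by simp
  also have "\<dots> = whiskR D (FC ?G \<phi>) (NCmp \<alpha> ?X)" by (rule two_nat_2naturality[OF \<alpha> \<phi> f])
  also have "\<dots> = whiskR D (whiskR D (FC ?G \<phi>) (M_factor ?X)) (E_factor ?X)"
    using D.whiskR_whiskR[OF G\<phi> mX' eX] E_M_factorization[OF X] by simp
  finally have w: "whiskL D (M_factor ?Y) (whiskL D (E_factor ?Y) (FC ?F \<phi>)) =
      whiskR D (whiskR D (FC ?G \<phi>) (M_factor ?X)) (E_factor ?X)" .
  have "\<exists>!\<Delta>. hom2 D \<Delta> (image_arr ?f) (image_arr ?g) \<and>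
      whiskR D \<Delta> (E_factor ?X) = whiskL D (E_factor ?Y) (FC ?F \<phi>) \<and>
      whiskL D (M_factor ?Y) \<Delta> = whiskR D (FC ?G \<phi>) (M_factor ?X)"
  proof (rule D.two_cell_filler_ex1[OF E_factor_in_E[OF X] M_factor_in_M[OF Y] _ _ _ _
        square[OF f] square[OF g] D.whiskL_hom[OF F\<phi> eY'] D.whiskR_hom[OF G\<phi> mX'] w])
    show "hom1 D (Comp D (E_factor ?Y) (FA ?F ?f)) (Dom D (E_factor ?X)) (Dom D (M_factor ?Y))"
      "hom1 D (Comp D (E_factor ?Y) (FA ?F ?g)) (Dom D (E_factor ?X)) (Dom D (M_factor ?Y))"
      "hom1 D (Comp D (FA ?G ?f) (M_factor ?X)) (Cod D (E_factor ?X)) (Cod D (M_factor ?Y))"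
      "hom1 D (Comp D (FA ?G ?g) (M_factor ?X)) (Cod D (E_factor ?X)) (Cod D (M_factor ?Y))"
      using D.comp_hom[OF Ff eY] D.comp_hom[OF Fg eY] D.comp_hom[OF mX Gf] D.comp_hom[OF mX Gg]
        eX mX eY mY
      by (simp_all add: hom1_def)
    show "hom1 D (image_arr ?f) (Cod D (E_factor ?X)) (Dom D (M_factor ?Y))"
      "hom1 D (image_arr ?g) (Cod D (E_factor ?X)) (Dom D (M_factor ?Y))"
      using image_arr_props(1)[OF f] image_arr_props(1)[OF g] eX mY by (simp_all add: hom1_def)
  qed (use image_arr_props(2,3)[OF f] image_arr_props(2,3)[OF g] in simp_all)
  then show ?thesis .
qed

lemma image_cell_spec_holds: "\<phi> \<in> Cell C \<Longrightarrow> image_cell_spec \<phi> (image_cell \<phi>)"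
  unfolding image_cell_def using theI'[OF image_cell_spec_ex1] by simp

lemma image_cell_unique: "\<phi> \<in> Cell C \<Longrightarrow> image_cell_spec \<phi> \<Delta> \<Longrightarrow> image_cell \<phi> = \<Delta>"
  using image_cell_spec_ex1 image_cell_spec_holds by blast

lemma image_cell_props:
  assumes "hom2 C \<phi> f g" "hom1 C f X Y"
  shows "hom2 D (image_cell \<phi>) (image_arr f) (image_arr g)"
    "whiskR D (image_cell \<phi>) (E_factor X) = whiskL D (E_factor Y) (FC (NSrc \<alpha>) \<phi>)"
    "whiskL D (M_factor Y) (image_cell \<phi>) = whiskR D (FC (NTgt \<alpha>) \<phi>) (M_factor X)"
  using image_cell_spec_holds[of \<phi>] assms by (auto simp: hom1_def hom2_def)

lemma image_arr_id1:
  assumes X: "X \<in> Obj C"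
  shows "image_arr (Id1 C X) = Id1 D (image_obj X)"
proof -
  have i: "hom1 C (Id1 C X) X X" by (rule C.id1_hom[OF X])
  have "image_arr_spec (Id1 C X) (Id1 D (image_obj X))"
    using i D.id1_hom[OF D.hom1_obj[OF factor_hom1(2)[OF X], THEN conjunct1]]
      D.comp_id_left[OF factor_hom1(1)[OF X]] D.comp_id_right[OF factor_hom1(1)[OF X]]
      D.comp_id_left[OF factor_hom1(2)[OF X]] D.comp_id_right[OF factor_hom1(2)[OF X]]
      two_functor_id1[OF two_nat_src[OF \<alpha>] X] two_functor_id1[OF two_nat_tgt[OF \<alpha>] X]
    by (simp add: hom1_def)
  then show ?thesis by (rule image_arr_unique[OF C.hom1_arr[OF i]])
qed

lemma image_arr_comp:
  assumes f: "hom1 C f X Y" and g: "hom1 C g Y Z"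
  shows "image_arr (Comp C g f) = Comp D (image_arr g) (image_arr f)"
proof -
  let ?F = "NSrc \<alpha>" and ?G = "NTgt \<alpha>"
  have gf: "hom1 C (Comp C g f) X Z" by (rule C.comp_hom[OF f g])
  have X: "X \<in> Obj C" and Y: "Y \<in> Obj C" and Z: "Z \<in> Obj C" using C.hom1_obj f g by blast+
  note Ff = two_functor_hom1[OF two_nat_src[OF \<alpha>] f] and Fg = two_functor_hom1[OF two_nat_src[OF \<alpha>] g]
    and Gf = two_functor_hom1[OF two_nat_tgt[OF \<alpha>] f] and Gg = two_functor_hom1[OF two_nat_tgt[OF \<alpha>] g]
  note Hf = image_arr_props[OF f] and Hg = image_arr_props[OF g]
  have F_comp: "FA ?F (Comp C g f) = Comp D (FA ?F g) (FA ?F f)"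
    and G_comp: "FA ?G (Comp C g f) = Comp D (FA ?G g) (FA ?G f)"
    using two_functor_comp[OF two_nat_src[OF \<alpha>]] two_functor_comp[OF two_nat_tgt[OF \<alpha>]] f g
    by (auto simp: hom1_def)
  have "Comp D (Comp D (image_arr g) (image_arr f)) (E_factor X)
      = Comp D (image_arr g) (Comp D (E_factor Y) (FA ?F f))"
    using D.comp_assoc[OF factor_hom1(1)[OF X] Hf(1) Hg(1)] Hf(2) by simp
  also have "\<dots> = Comp D (E_factor Z) (FA ?F (Comp C g f))"
    using D.comp_assoc[OF Ff factor_hom1(1)[OF Y] Hg(1)] Hg(2)
      D.comp_assoc[OF Ff Fg factor_hom1(1)[OF Z]] F_comp by simp
  finally have E_eq: "Comp D (Comp D (image_arr g) (image_arr f)) (E_factor X) =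
      Comp D (E_factor Z) (FA ?F (Comp C g f))" .
  have "Comp D (M_factor Z) (Comp D (image_arr g) (image_arr f))
      = Comp D (Comp D (FA ?G g) (M_factor Y)) (image_arr f)"
    using D.comp_assoc[OF Hf(1) Hg(1) factor_hom1(2)[OF Z]] Hg(3) by simp
  also have "\<dots> = Comp D (FA ?G (Comp C g f)) (M_factor X)"
    using D.comp_assoc[OF Hf(1) factor_hom1(2)[OF Y] Gg] Hf(3)
      D.comp_assoc[OF factor_hom1(2)[OF X] Gf Gg] G_comp by simp
  finally have M_eq: "Comp D (M_factor Z) (Comp D (image_arr g) (image_arr f)) =
      Comp D (FA ?G (Comp C g f)) (M_factor X)" .
  have "image_arr_spec (Comp C g f) (Comp D (image_arr g) (image_arr f))"
    using D.comp_hom[OF Hf(1) Hg(1)] E_eq M_eq gf by (simp add: hom1_def)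
  then show ?thesis using image_arr_unique[OF C.hom1_arr[OF gf]] by simp
qed

lemma image_cell_id2:
  assumes "f \<in> Arr C"
  shows "image_cell (Id2 C f) = Id2 D (image_arr f)"
proof -
  let ?X = "Dom C f" and ?Y = "Cod C f"
  have f: "hom1 C f ?X ?Y" using assms by (rule C.hom1I)
  have i: "hom2 C (Id2 C f) f f" by (rule C.id2_hom[OF assms])
  have X: "?X \<in> Obj C" and Y: "?Y \<in> Obj C" using C.hom1_obj[OF f] by auto
  note Hf = image_arr_props[OF f]
  have "image_cell_spec (Id2 C f) (Id2 D (image_arr f))"
    using i D.id2_hom[OF D.hom1_arr[OF Hf(1)]]
      D.whiskR_id2[OF Hf(1) factor_hom1(1)[OF X]] D.whiskL_id2[OF _ factor_hom1(1)[OF Y]]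
      D.whiskL_id2[OF Hf(1) factor_hom1(2)[OF Y]] D.whiskR_id2[OF _ factor_hom1(2)[OF X]]
      two_functor_hom1[OF two_nat_src[OF \<alpha>] f] two_functor_hom1[OF two_nat_tgt[OF \<alpha>] f]
      two_functor_id2[OF two_nat_src[OF \<alpha>] assms] two_functor_id2[OF two_nat_tgt[OF \<alpha>] assms] Hf(2,3)
    by (simp add: hom2_def)
  moreover have "Id2 C f \<in> Cell C" using i by (simp add: hom2_def)
  ultimately show ?thesis using image_cell_unique by blast
qed

lemma image_cell_vcomp:
  assumes \<phi>: "hom2 C \<phi> f g" and \<psi>: "hom2 C \<psi> g h" and f: "hom1 C f X Y"
  shows "image_cell (VComp C \<psi> \<phi>) = VComp D (image_cell \<psi>) (image_cell \<phi>)"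
proof -
  let ?F = "NSrc \<alpha>" and ?G = "NTgt \<alpha>"
  have g: "hom1 C g X Y" using f C.hom2_parallel[OF \<phi>] by (simp add: hom1_def)
  have \<psi>\<phi>: "hom2 C (VComp C \<psi> \<phi>) f h" by (rule C.vcomp_hom[OF \<phi> \<psi>])
  have X: "X \<in> Obj C" and Y: "Y \<in> Obj C" using C.hom1_obj[OF f] by auto
  note H\<phi> = image_cell_props[OF \<phi> f] and H\<psi> = image_cell_props[OF \<psi> g]
  note F\<phi> = two_functor_hom2[OF two_nat_src[OF \<alpha>] \<phi>] and F\<psi> = two_functor_hom2[OF two_nat_src[OF \<alpha>] \<psi>]
    and G\<phi> = two_functor_hom2[OF two_nat_tgt[OF \<alpha>] \<phi>] and G\<psi> = two_functor_hom2[OF two_nat_tgt[OF \<alpha>] \<psi>]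
  have cells: "\<phi> \<in> Cell C" "\<psi> \<in> Cell C" "Tgt C \<phi> = Src C \<psi>" using \<phi> \<psi> by (auto simp: hom2_def)
  have eX: "hom1 D (E_factor X) (FO ?F X) (Dom D (image_arr f))"
    and mY: "hom1 D (M_factor Y) (Cod D (image_arr f)) (FO ?G Y)"
    and eY: "hom1 D (E_factor Y) (Cod D (FA ?F f)) (image_obj Y)"
    and mX: "hom1 D (M_factor X) (image_obj X) (Dom D (FA ?G f))"
    using factor_hom1[OF X] factor_hom1[OF Y] image_arr_props(1)[OF f]
      two_functor_hom1[OF two_nat_src[OF \<alpha>] f] two_functor_hom1[OF two_nat_tgt[OF \<alpha>] f]
    by (simp_all add: hom1_def)
  have "whiskR D (VComp D (image_cell \<psi>) (image_cell \<phi>)) (E_factor X)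
      = VComp D (whiskL D (E_factor Y) (FC ?F \<psi>)) (whiskL D (E_factor Y) (FC ?F \<phi>))"
    using D.whiskR_vcomp[OF H\<phi>(1) H\<psi>(1) eX] H\<phi>(2) H\<psi>(2) by simp
  also have "\<dots> = whiskL D (E_factor Y) (FC ?F (VComp C \<psi> \<phi>))"
    using D.whiskL_vcomp[OF F\<phi> F\<psi> eY] two_functor_vcomp[OF two_nat_src[OF \<alpha>] cells] by simp
  finally have E_eq: "whiskR D (VComp D (image_cell \<psi>) (image_cell \<phi>)) (E_factor X) =
      whiskL D (E_factor Y) (FC ?F (VComp C \<psi> \<phi>))" .
  have "whiskL D (M_factor Y) (VComp D (image_cell \<psi>) (image_cell \<phi>))
      = VComp D (whiskR D (FC ?G \<psi>) (M_factor X)) (whiskR D (FC ?G \<phi>) (M_factor X))"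
    using D.whiskL_vcomp[OF H\<phi>(1) H\<psi>(1) mY] H\<phi>(3) H\<psi>(3) by simp
  also have "\<dots> = whiskR D (FC ?G (VComp C \<psi> \<phi>)) (M_factor X)"
    using D.whiskR_vcomp[OF G\<phi> G\<psi> mX] two_functor_vcomp[OF two_nat_tgt[OF \<alpha>] cells] by simp
  finally have M_eq: "whiskL D (M_factor Y) (VComp D (image_cell \<psi>) (image_cell \<phi>)) =
      whiskR D (FC ?G (VComp C \<psi> \<phi>)) (M_factor X)" .
  have "image_cell_spec (VComp C \<psi> \<phi>) (VComp D (image_cell \<psi>) (image_cell \<phi>))"
    using D.vcomp_hom[OF H\<phi>(1) H\<psi>(1)] E_eq M_eq \<psi>\<phi> f by (simp add: hom2_def hom1_def)
  then show ?thesis using image_cell_unique \<psi>\<phi> by (simp add: hom2_def)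
qed

lemma image_cell_hcomp:
  assumes \<phi>: "hom2 C \<phi> f f'" and \<psi>: "hom2 C \<psi> g g'" and f: "hom1 C f X Y" and g: "hom1 C g Y Z"
  shows "image_cell (HComp C \<psi> \<phi>) = HComp D (image_cell \<psi>) (image_cell \<phi>)"
proof -
  let ?F = "NSrc \<alpha>" and ?G = "NTgt \<alpha>"
  have f': "hom1 C f' X Y" and g': "hom1 C g' Y Z"
    using f g C.hom2_parallel[OF \<phi>] C.hom2_parallel[OF \<psi>] by (simp_all add: hom1_def)
  have \<psi>\<phi>: "hom2 C (HComp C \<psi> \<phi>) (Comp C g f) (Comp C g' f')"
    by (rule C.hcomp_hom[OF \<phi> \<psi>]) (use f g in \<open>simp add: hom1_def\<close>)
  have gf: "hom1 C (Comp C g f) X Z" by (rule C.comp_hom[OF f g])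
  have X: "X \<in> Obj C" and Y: "Y \<in> Obj C" and Z: "Z \<in> Obj C" using C.hom1_obj f g by blast+
  have cells: "\<phi> \<in> Cell C" "\<psi> \<in> Cell C" "Cod C (Src C \<phi>) = Dom C (Src C \<psi>)"
    using \<phi> \<psi> f g by (auto simp: hom2_def hom1_def)
  note H\<phi> = image_cell_props[OF \<phi> f] and H\<psi> = image_cell_props[OF \<psi> g]
  note Hf = image_arr_props(1)[OF f] and Hg = image_arr_props(1)[OF g]
  note Ff = two_functor_hom1[OF two_nat_src[OF \<alpha>] f] and Fg = two_functor_hom1[OF two_nat_src[OF \<alpha>] g]
    and Gf = two_functor_hom1[OF two_nat_tgt[OF \<alpha>] f] and Gg = two_functor_hom1[OF two_nat_tgt[OF \<alpha>] g]
  note F\<phi> = two_functor_hom2[OF two_nat_src[OF \<alpha>] \<phi>] and F\<psi> = two_functor_hom2[OF two_nat_src[OF \<alpha>] \<psi>]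
    and G\<phi> = two_functor_hom2[OF two_nat_tgt[OF \<alpha>] \<phi>] and G\<psi> = two_functor_hom2[OF two_nat_tgt[OF \<alpha>] \<psi>]
  note eX = factor_hom1(1)[OF X] and eY = factor_hom1(1)[OF Y] and eZ = factor_hom1(1)[OF Z]
    and mX = factor_hom1(2)[OF X] and mY = factor_hom1(2)[OF Y] and mZ = factor_hom1(2)[OF Z]
  have I: "hom2 D (Id2 D u) u u" if "hom1 D u V W" for u V W using D.id2_hom[OF D.hom1_arr[OF that]] .
  have dc: "Cod D (E_factor X) = Dom D (image_arr f)" "Cod D (image_arr f) = Dom D (image_arr g)"
    "Cod D (E_factor Y) = Dom D (image_arr g)" "Cod D (FA ?F f) = Dom D (E_factor Y)"
    "Cod D (FA ?F f) = Dom D (FA ?F g)" "Cod D (FA ?F g) = Dom D (E_factor Z)"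
    "Cod D (image_arr f) = Dom D (M_factor Y)" "Cod D (image_arr g) = Dom D (M_factor Z)"
    "Cod D (M_factor Y) = Dom D (FA ?G g)" "Cod D (M_factor X) = Dom D (FA ?G f)"
    "Cod D (FA ?G f) = Dom D (FA ?G g)"
    using eX eY eZ mX mY mZ Hf Hg Ff Fg Gf Gg by (simp_all add: hom1_def)
  have "whiskR D (HComp D (image_cell \<psi>) (image_cell \<phi>)) (E_factor X)
      = HComp D (image_cell \<psi>) (HComp D (image_cell \<phi>) (Id2 D (E_factor X)))"
    unfolding whiskR_def by (rule D.hcomp_assoc[OF I[OF eX] H\<phi>(1) H\<psi>(1) dc(1,2), symmetric])
  also have "\<dots> = HComp D (HComp D (image_cell \<psi>) (Id2 D (E_factor Y))) (FC ?F \<phi>)"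
    using H\<phi>(2) D.hcomp_assoc[OF F\<phi> I[OF eY] H\<psi>(1) dc(4,3)] by (simp add: whiskL_def whiskR_def)
  also have "\<dots> = HComp D (Id2 D (E_factor Z)) (HComp D (FC ?F \<psi>) (FC ?F \<phi>))"
    using H\<psi>(2) D.hcomp_assoc[OF F\<phi> F\<psi> I[OF eZ] dc(5,6)] by (simp add: whiskL_def whiskR_def)
  also have "\<dots> = whiskL D (E_factor Z) (FC ?F (HComp C \<psi> \<phi>))"
    using two_functor_hcomp[OF two_nat_src[OF \<alpha>] cells] by (simp add: whiskL_def)
  finally have E_eq: "whiskR D (HComp D (image_cell \<psi>) (image_cell \<phi>)) (E_factor X) =
      whiskL D (E_factor Z) (FC ?F (HComp C \<psi> \<phi>))" .
  have "whiskL D (M_factor Z) (HComp D (image_cell \<psi>) (image_cell \<phi>))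
      = HComp D (HComp D (Id2 D (M_factor Z)) (image_cell \<psi>)) (image_cell \<phi>)"
    unfolding whiskL_def by (rule D.hcomp_assoc[OF H\<phi>(1) H\<psi>(1) I[OF mZ] dc(2,8)])
  also have "\<dots> = HComp D (FC ?G \<psi>) (HComp D (Id2 D (M_factor Y)) (image_cell \<phi>))"
    using H\<psi>(3) D.hcomp_assoc[OF H\<phi>(1) I[OF mY] G\<psi> dc(7,9)] by (simp add: whiskL_def whiskR_def)
  also have "\<dots> = HComp D (HComp D (FC ?G \<psi>) (FC ?G \<phi>)) (Id2 D (M_factor X))"
    using H\<phi>(3) D.hcomp_assoc[OF I[OF mX] G\<phi> G\<psi> dc(10,11)] by (simp add: whiskL_def whiskR_def)
  also have "\<dots> = whiskR D (FC ?G (HComp C \<psi> \<phi>)) (M_factor X)"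
    using two_functor_hcomp[OF two_nat_tgt[OF \<alpha>] cells] by (simp add: whiskR_def)
  finally have M_eq: "whiskL D (M_factor Z) (HComp D (image_cell \<psi>) (image_cell \<phi>)) =
      whiskR D (FC ?G (HComp C \<psi> \<phi>)) (M_factor X)" .
  have "hom2 D (HComp D (image_cell \<psi>) (image_cell \<phi>))
      (image_arr (Comp C g f)) (image_arr (Comp C g' f'))"
    using D.hcomp_hom[OF H\<phi>(1) H\<psi>(1) dc(2)] image_arr_comp[OF f g] image_arr_comp[OF f' g'] by simp
  then have "image_cell_spec (HComp C \<psi> \<phi>) (HComp D (image_cell \<psi>) (image_cell \<phi>))"
    using E_eq M_eq \<psi>\<phi> gf by (simp add: hom2_def hom1_def)
  then show ?thesis using image_cell_unique \<psi>\<phi> by (simp add: hom2_def)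
qed

definition image_functor where "image_functor = \<lparr> FO = image_obj, FA = image_arr, FC = image_cell \<rparr>"

lemma two_functor_image_functor: "two_functor C D image_functor"
  unfolding two_functor_def image_functor_def tfun.simps
proof (intro conjI ballI allI impI)
  show "image_obj X = undefined" if "X \<notin> Obj C" for X using that by (simp add: image_obj_def)
  show "image_arr f = undefined" if "f \<notin> Arr C" for f using that by (simp add: image_arr_def)
  show "image_cell \<phi> = undefined" if "\<phi> \<notin> Cell C" for \<phi> using that by (simp add: image_cell_def)
  show "image_obj X \<in> Obj D" if "X \<in> Obj C" for X
    using D.hom1_obj[OF factor_hom1(2)[OF that]] by blast
  show "hom1 D (image_arr f) (image_obj (Dom C f)) (image_obj (Cod C f))" if "f \<in> Arr C" for f
    using image_arr_props(1)[OF C.hom1I[OF that]] .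
  show "image_arr (Id1 C X) = Id1 D (image_obj X)" if "X \<in> Obj C" for X
    using image_arr_id1[OF that] .
  show "image_arr (Comp C g f) = Comp D (image_arr g) (image_arr f)"
    if "f \<in> Arr C" "g \<in> Arr C" "Cod C f = Dom C g" for f g
    using image_arr_comp[OF C.hom1I[OF that(1)]] C.hom1I[OF that(2)] that(3) by simp
  show "hom2 D (image_cell \<phi>) (image_arr (Src C \<phi>)) (image_arr (Tgt C \<phi>))" if "\<phi> \<in> Cell C" for \<phi>
    using image_cell_spec_holds[OF that] by blast
  show "image_cell (Id2 C f) = Id2 D (image_arr f)" if "f \<in> Arr C" for f
    using image_cell_id2[OF that] .
  show "image_cell (VComp C \<psi> \<phi>) = VComp D (image_cell \<psi>) (image_cell \<phi>)"
    if "\<phi> \<in> Cell C" "\<psi> \<in> Cell C" "Tgt C \<phi> = Src C \<psi>" for \<phi> \<psi>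
    using image_cell_vcomp C.cell_hom that by metis
  show "image_cell (HComp C \<psi> \<phi>) = HComp D (image_cell \<psi>) (image_cell \<phi>)"
    if "\<phi> \<in> Cell C" "\<psi> \<in> Cell C" "Cod C (Src C \<phi>) = Dom C (Src C \<psi>)" for \<phi> \<psi>
    using image_cell_hcomp C.cell_hom that by metis
qed

definition E_nat where
  "E_nat = \<lparr> NSrc = NSrc \<alpha>, NTgt = image_functor,
     NCmp = (\<lambda>X. if X \<in> Obj C then E_factor X else undefined) \<rparr>"

definition M_nat where
  "M_nat = \<lparr> NSrc = image_functor, NTgt = NTgt \<alpha>,
     NCmp = (\<lambda>X. if X \<in> Obj C then M_factor X else undefined) \<rparr>"

lemma two_nat_E_nat: "two_nat C D E_nat"
  unfolding two_nat_def
proof (intro conjI ballI allI impI)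
  show "two_functor C D (NSrc E_nat)" "two_functor C D (NTgt E_nat)"
    using two_nat_src[OF \<alpha>] two_functor_image_functor by (simp_all add: E_nat_def)
  show "NCmp E_nat X = undefined" if "X \<notin> Obj C" for X using that by (simp add: E_nat_def)
  show "hom1 D (NCmp E_nat X) (FO (NSrc E_nat) X) (FO (NTgt E_nat) X)" if "X \<in> Obj C" for X
    using factor_hom1(1)[OF that] that by (simp add: E_nat_def image_functor_def)
  show "Comp D (FA (NTgt E_nat) f) (NCmp E_nat (Dom C f)) =
      Comp D (NCmp E_nat (Cod C f)) (FA (NSrc E_nat) f)"
    if "f \<in> Arr C" for f
    using image_arr_props(2)[OF C.hom1I[OF that]] C.dom_cod_obj[OF that]
      by (simp add: E_nat_def image_functor_def)
  show "whiskL D (NCmp E_nat (Cod C (Src C \<phi>))) (FC (NSrc E_nat) \<phi>) =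
      whiskR D (FC (NTgt E_nat) \<phi>) (NCmp E_nat (Dom C (Src C \<phi>)))" if "\<phi> \<in> Cell C" for \<phi>
  proof -
    have "Dom C (Src C \<phi>) \<in> Obj C" "Cod C (Src C \<phi>) \<in> Obj C"
      using C.cell_hom[OF that] C.hom1_obj by blast+
    then show ?thesis using image_cell_spec_holds[OF that] by (simp add: E_nat_def image_functor_def)
  qed
qed

lemma two_nat_M_nat: "two_nat C D M_nat"
  unfolding two_nat_def
proof (intro conjI ballI allI impI)
  show "two_functor C D (NSrc M_nat)" "two_functor C D (NTgt M_nat)"
    using two_nat_tgt[OF \<alpha>] two_functor_image_functor by (simp_all add: M_nat_def)
  show "NCmp M_nat X = undefined" if "X \<notin> Obj C" for X using that by (simp add: M_nat_def)
  show "hom1 D (NCmp M_nat X) (FO (NSrc M_nat) X) (FO (NTgt M_nat) X)" if "X \<in> Obj C" for X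
    using factor_hom1(2)[OF that] that by (simp add: M_nat_def image_functor_def)
  show "Comp D (FA (NTgt M_nat) f) (NCmp M_nat (Dom C f)) =
      Comp D (NCmp M_nat (Cod C f)) (FA (NSrc M_nat) f)"
    if "f \<in> Arr C" for f
    using image_arr_props(3)[OF C.hom1I[OF that]] C.dom_cod_obj[OF that]
      by (simp add: M_nat_def image_functor_def)
  show "whiskL D (NCmp M_nat (Cod C (Src C \<phi>))) (FC (NSrc M_nat) \<phi>) =
      whiskR D (FC (NTgt M_nat) \<phi>) (NCmp M_nat (Dom C (Src C \<phi>)))" if "\<phi> \<in> Cell C" for \<phi>
  proof -
    have "Dom C (Src C \<phi>) \<in> Obj C" "Cod C (Src C \<phi>) \<in> Obj C"
      using C.cell_hom[OF that] C.hom1_obj by blast+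
    then show ?thesis using image_cell_spec_holds[OF that] by (simp add: M_nat_def image_functor_def)
  qed
qed

lemma factorization_functor_cat:
  "\<exists>\<epsilon>\<in>pointwise_class C D E. \<exists>\<mu>\<in>pointwise_class C D M. NTgt \<epsilon> = NSrc \<mu> \<and> \<alpha> = nat_comp C D \<mu> \<epsilon>"
proof (intro bexI conjI)
  show "E_nat \<in> pointwise_class C D E" "M_nat \<in> pointwise_class C D M"
    using two_nat_E_nat two_nat_M_nat E_M_factorization
      by (simp_all add: pointwise_class_def E_nat_def M_nat_def)
  show "NTgt E_nat = NSrc M_nat" by (simp add: E_nat_def M_nat_def)
  show "\<alpha> = nat_comp C D M_nat E_nat"
    by (rule two_nat_eqI[OF \<alpha> two_nat_nat_comp[OF two_nat_E_nat two_nat_M_nat]])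
      (use E_M_factorization in \<open>simp_all add: E_nat_def M_nat_def\<close>)
qed

end

context
  fixes \<epsilon> \<mu> \<alpha> \<alpha>' \<Psi>
  assumes \<epsilon>: "\<epsilon> \<in> pointwise_class C D E" and \<mu>: "\<mu> \<in> pointwise_class C D M"
    and \<alpha>: "hom1 DC \<alpha> (NSrc \<epsilon>) (NSrc \<mu>)" and \<alpha>': "hom1 DC \<alpha>' (NTgt \<epsilon>) (NTgt \<mu>)"
    and \<Psi>: "hom2 DC \<Psi> (nat_comp C D \<alpha>' \<epsilon>) (nat_comp C D \<mu> \<alpha>)" and \<Psi>_iso: "iso2 DC \<Psi>"
begin

lemma square_functors:
  "two_functor C D (NSrc \<epsilon>)" "two_functor C D (NTgt \<epsilon>)"
  "two_functor C D (NSrc \<mu>)" "two_functor C D (NTgt \<mu>)"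
  using two_nat_src two_nat_tgt pointwise_classD(1)[OF \<epsilon>] pointwise_classD(1)[OF \<mu>] by auto

lemma square_component_hom1:
  assumes X: "X \<in> Obj C"
  shows "hom1 D (NCmp \<epsilon> X) (FO (NSrc \<epsilon>) X) (FO (NTgt \<epsilon>) X)"
    "hom1 D (NCmp \<mu> X) (FO (NSrc \<mu>) X) (FO (NTgt \<mu>) X)"
    "hom1 D (NCmp \<alpha> X) (FO (NSrc \<epsilon>) X) (FO (NSrc \<mu>) X)"
    "hom1 D (NCmp \<alpha>' X) (FO (NTgt \<epsilon>) X) (FO (NTgt \<mu>) X)"
  using two_nat_hom1[OF pointwise_classD(1)[OF \<epsilon>] X] two_nat_hom1[OF pointwise_classD(1)[OF \<mu>] X]
    hom1_functor_cat_component[OF \<alpha> X] hom1_functor_cat_component[OF \<alpha>' X] by auto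

lemma lifting_problem_at:
  assumes X: "X \<in> Obj C"
  shows "NCmp \<epsilon> X \<in> E" "NCmp \<mu> X \<in> M"
    "hom1 D (NCmp \<alpha> X) (Dom D (NCmp \<epsilon> X)) (Dom D (NCmp \<mu> X))"
    "hom1 D (NCmp \<alpha>' X) (Cod D (NCmp \<epsilon> X)) (Cod D (NCmp \<mu> X))"
    "hom2 D (MCmp \<Psi> X) (Comp D (NCmp \<alpha>' X) (NCmp \<epsilon> X)) (Comp D (NCmp \<mu> X) (NCmp \<alpha> X))"
    "iso2 D (MCmp \<Psi> X)"
  using pointwise_classD(2)[OF \<epsilon> X] pointwise_classD(2)[OF \<mu> X] square_component_hom1[OF X]
    hom2_functor_cat_component[OF \<Psi> X] iso2_functor_cat_component[OF \<Psi>_iso X] X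
  by (auto simp: hom1_def)

abbreviation filler_at where
  "filler_at X \<equiv> iso_filler D (NCmp \<epsilon> X) (NCmp \<mu> X) (NCmp \<alpha> X) (NCmp \<alpha>' X) (MCmp \<Psi> X)"

definition lift_arr where "lift_arr X = (SOME \<delta>. \<exists>\<Psi>'. filler_at X \<delta> \<Psi>')"

definition lift_cell where "lift_cell X = (SOME \<Psi>'. filler_at X (lift_arr X) \<Psi>')"

lemma lift_at: "X \<in> Obj C \<Longrightarrow> filler_at X (lift_arr X) (lift_cell X)"
  unfolding lift_cell_def lift_arr_def
  by (rule someI_ex, rule someI_ex) (meson D.iso_filler_exists lifting_problem_at)

lemma lift_at_unique: "X \<in> Obj C \<Longrightarrow> filler_at X \<delta> \<Psi>' \<Longrightarrow> \<delta> = lift_arr X \<and> \<Psi>' = lift_cell X"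
  using D.iso_filler_unique[OF lifting_problem_at _ lift_at] by blast

lemma lift_at_props:
  assumes X: "X \<in> Obj C"
  shows "hom1 D (lift_arr X) (FO (NTgt \<epsilon>) X) (FO (NSrc \<mu>) X)"
    "hom2 D (lift_cell X) (NCmp \<alpha>' X) (Comp D (NCmp \<mu> X) (lift_arr X))" "iso2 D (lift_cell X)"
    "Comp D (lift_arr X) (NCmp \<epsilon> X) = NCmp \<alpha> X" "whiskR D (lift_cell X) (NCmp \<epsilon> X) = MCmp \<Psi> X"
  using lift_at[OF X] square_component_hom1[OF X] unfolding iso_filler_def by (auto simp: hom1_def)

text \<open>Along \<open>f : X \<rightarrow> Y\<close>, composing the lift at \<open>Y\<close> with \<open>f\<close> and composing \<open>f\<close> with the lift at
  \<open>X\<close> both solve this lifting problem; uniqueness makes the lifts natural.\<close>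

lemma shifted_lifting_problem:
  assumes f: "hom1 C f X Y"
  shows "hom1 D (Comp D (NCmp \<alpha> Y) (FA (NSrc \<epsilon>) f)) (Dom D (NCmp \<epsilon> X)) (Dom D (NCmp \<mu> Y))"
    "hom1 D (Comp D (NCmp \<alpha>' Y) (FA (NTgt \<epsilon>) f)) (Cod D (NCmp \<epsilon> X)) (Cod D (NCmp \<mu> Y))"
    "hom2 D (whiskR D (MCmp \<Psi> Y) (FA (NSrc \<epsilon>) f))
      (Comp D (Comp D (NCmp \<alpha>' Y) (FA (NTgt \<epsilon>) f)) (NCmp \<epsilon> X))
      (Comp D (NCmp \<mu> Y) (Comp D (NCmp \<alpha> Y) (FA (NSrc \<epsilon>) f)))"
    "iso2 D (whiskR D (MCmp \<Psi> Y) (FA (NSrc \<epsilon>) f))"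
proof -
  have X: "X \<in> Obj C" and Y: "Y \<in> Obj C" using C.hom1_obj[OF f] by auto
  note hX = square_component_hom1[OF X] and hY = square_component_hom1[OF Y]
  note Ff = two_functor_hom1[OF square_functors(1) f]
    and F'f = two_functor_hom1[OF square_functors(2) f]
  show "hom1 D (Comp D (NCmp \<alpha> Y) (FA (NSrc \<epsilon>) f)) (Dom D (NCmp \<epsilon> X)) (Dom D (NCmp \<mu> Y))"
    "hom1 D (Comp D (NCmp \<alpha>' Y) (FA (NTgt \<epsilon>) f)) (Cod D (NCmp \<epsilon> X)) (Cod D (NCmp \<mu> Y))"
    using D.comp_hom[OF Ff hY(3)] D.comp_hom[OF F'f hY(4)] hX hY by (auto simp: hom1_def)
  have \<Psi>Y: "hom2 D (MCmp \<Psi> Y) (Comp D (NCmp \<alpha>' Y) (NCmp \<epsilon> Y)) (Comp D (NCmp \<mu> Y) (NCmp \<alpha> Y))"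
    using lifting_problem_at(5)[OF Y] .
  have Ff': "hom1 D (FA (NSrc \<epsilon>) f) (FO (NSrc \<epsilon>) X) (Dom D (Comp D (NCmp \<alpha>' Y) (NCmp \<epsilon> Y)))"
    using Ff D.comp_hom[OF hY(1) hY(4)] by (simp add: hom1_def)
  have "Comp D (Comp D (NCmp \<alpha>' Y) (FA (NTgt \<epsilon>) f)) (NCmp \<epsilon> X)
      = Comp D (Comp D (NCmp \<alpha>' Y) (NCmp \<epsilon> Y)) (FA (NSrc \<epsilon>) f)"
    using D.comp_assoc[OF hX(1) F'f hY(4)] D.comp_assoc[OF Ff hY(1) hY(4)]
      two_nat_naturality[OF pointwise_classD(1)[OF \<epsilon>] f] by simp
  moreover have "Comp D (NCmp \<mu> Y) (Comp D (NCmp \<alpha> Y) (FA (NSrc \<epsilon>) f))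
      = Comp D (Comp D (NCmp \<mu> Y) (NCmp \<alpha> Y)) (FA (NSrc \<epsilon>) f)"
    by (rule D.comp_assoc[OF Ff hY(3) hY(2)])
  ultimately show "hom2 D (whiskR D (MCmp \<Psi> Y) (FA (NSrc \<epsilon>) f))
      (Comp D (Comp D (NCmp \<alpha>' Y) (FA (NTgt \<epsilon>) f)) (NCmp \<epsilon> X))
      (Comp D (NCmp \<mu> Y) (Comp D (NCmp \<alpha> Y) (FA (NSrc \<epsilon>) f)))"
    using D.whiskR_hom[OF \<Psi>Y Ff'] by simp
  show "iso2 D (whiskR D (MCmp \<Psi> Y) (FA (NSrc \<epsilon>) f))"
    by (rule D.iso2_whiskR[OF lifting_problem_at(6)[OF Y] \<Psi>Y Ff'])
qed

lemma lift_through_target: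
  assumes f: "hom1 C f X Y"
  shows "iso_filler D (NCmp \<epsilon> X) (NCmp \<mu> Y)
    (Comp D (NCmp \<alpha> Y) (FA (NSrc \<epsilon>) f)) (Comp D (NCmp \<alpha>' Y) (FA (NTgt \<epsilon>) f))
    (whiskR D (MCmp \<Psi> Y) (FA (NSrc \<epsilon>) f))
    (Comp D (lift_arr Y) (FA (NTgt \<epsilon>) f)) (whiskR D (lift_cell Y) (FA (NTgt \<epsilon>) f))"
  unfolding iso_filler_def
proof (intro conjI)
  have X: "X \<in> Obj C" and Y: "Y \<in> Obj C" using C.hom1_obj[OF f] by auto
  note hX = square_component_hom1[OF X] and hY = square_component_hom1[OF Y] and lY = lift_at_props[OF Y]
  note Ff = two_functor_hom1[OF square_functors(1) f]
    and F'f = two_functor_hom1[OF square_functors(2) f]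
  have F'f': "hom1 D (FA (NTgt \<epsilon>) f) (FO (NTgt \<epsilon>) X) (Dom D (NCmp \<alpha>' Y))"
    using F'f hY(4) by (simp add: hom1_def)
  have \<epsilon>Y: "hom1 D (NCmp \<epsilon> Y) (FO (NSrc \<epsilon>) Y) (Dom D (NCmp \<alpha>' Y))"
    using hY(1,4) by (simp add: hom1_def)
  note nat\<epsilon> = two_nat_naturality[OF pointwise_classD(1)[OF \<epsilon>] f]
  show "hom1 D (Comp D (lift_arr Y) (FA (NTgt \<epsilon>) f)) (Cod D (NCmp \<epsilon> X)) (Dom D (NCmp \<mu> Y))"
    using D.comp_hom[OF F'f lY(1)] hX hY by (simp add: hom1_def)
  show "hom2 D (whiskR D (lift_cell Y) (FA (NTgt \<epsilon>) f)) (Comp D (NCmp \<alpha>' Y) (FA (NTgt \<epsilon>) f))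
      (Comp D (NCmp \<mu> Y) (Comp D (lift_arr Y) (FA (NTgt \<epsilon>) f)))"
    using D.whiskR_hom[OF lY(2) F'f'] D.comp_assoc[OF F'f lY(1) hY(2)] by simp
  show "iso2 D (whiskR D (lift_cell Y) (FA (NTgt \<epsilon>) f))"
    by (rule D.iso2_whiskR[OF lY(3,2) F'f'])
  show "Comp D (Comp D (lift_arr Y) (FA (NTgt \<epsilon>) f)) (NCmp \<epsilon> X) = Comp D (NCmp \<alpha> Y) (FA (NSrc \<epsilon>) f)"
    using D.comp_assoc[OF hX(1) F'f lY(1)] nat\<epsilon> D.comp_assoc[OF Ff hY(1) lY(1)] lY(4) by simp
  have "whiskR D (whiskR D (lift_cell Y) (FA (NTgt \<epsilon>) f)) (NCmp \<epsilon> X)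
      = whiskR D (lift_cell Y) (Comp D (NCmp \<epsilon> Y) (FA (NSrc \<epsilon>) f))"
    using D.whiskR_whiskR[OF lY(2) F'f' hX(1)] nat\<epsilon> by simp
  also have "\<dots> = whiskR D (MCmp \<Psi> Y) (FA (NSrc \<epsilon>) f)"
    using D.whiskR_whiskR[OF lY(2) \<epsilon>Y Ff] lY(5) by simp
  finally show "whiskR D (whiskR D (lift_cell Y) (FA (NTgt \<epsilon>) f)) (NCmp \<epsilon> X) =
      whiskR D (MCmp \<Psi> Y) (FA (NSrc \<epsilon>) f)" .
qed

lemma lift_through_source:
  assumes f: "hom1 C f X Y"
  shows "iso_filler D (NCmp \<epsilon> X) (NCmp \<mu> Y)
    (Comp D (NCmp \<alpha> Y) (FA (NSrc \<epsilon>) f)) (Comp D (NCmp \<alpha>' Y) (FA (NTgt \<epsilon>) f))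
    (whiskR D (MCmp \<Psi> Y) (FA (NSrc \<epsilon>) f))
    (Comp D (FA (NSrc \<mu>) f) (lift_arr X)) (whiskL D (FA (NTgt \<mu>) f) (lift_cell X))"
  unfolding iso_filler_def
proof (intro conjI)
  have X: "X \<in> Obj C" and Y: "Y \<in> Obj C" using C.hom1_obj[OF f] by auto
  note hX = square_component_hom1[OF X] and hY = square_component_hom1[OF Y] and lX = lift_at_props[OF X]
  note Gf = two_functor_hom1[OF square_functors(3) f]
    and G'f = two_functor_hom1[OF square_functors(4) f]
  have G'f': "hom1 D (FA (NTgt \<mu>) f) (Cod D (NCmp \<alpha>' X)) (FO (NTgt \<mu>) Y)"
    using G'f hX(4) by (simp add: hom1_def)
  have \<epsilon>X: "hom1 D (NCmp \<epsilon> X) (FO (NSrc \<epsilon>) X) (Dom D (NCmp \<alpha>' X))"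
    using hX(1,4) by (simp add: hom1_def)
  note nat\<alpha> = hom1_functor_cat_component
  show "hom1 D (Comp D (FA (NSrc \<mu>) f) (lift_arr X)) (Cod D (NCmp \<epsilon> X)) (Dom D (NCmp \<mu> Y))"
    using D.comp_hom[OF lX(1) Gf] hX hY by (simp add: hom1_def)
  have "Comp D (FA (NTgt \<mu>) f) (Comp D (NCmp \<mu> X) (lift_arr X))
      = Comp D (NCmp \<mu> Y) (Comp D (FA (NSrc \<mu>) f) (lift_arr X))"
    using D.comp_assoc[OF lX(1) hX(2) G'f] D.comp_assoc[OF lX(1) Gf hY(2)]
      two_nat_naturality[OF pointwise_classD(1)[OF \<mu>] f] by simp
  moreover have "Comp D (FA (NTgt \<mu>) f) (NCmp \<alpha>' X) = Comp D (NCmp \<alpha>' Y) (FA (NTgt \<epsilon>) f)"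
    using two_nat_naturality[of \<alpha>' f X Y] \<alpha>' f by (simp add: hom1_functor_cat)
  ultimately show "hom2 D (whiskL D (FA (NTgt \<mu>) f) (lift_cell X)) (Comp D (NCmp \<alpha>' Y) (FA (NTgt \<epsilon>) f))
      (Comp D (NCmp \<mu> Y) (Comp D (FA (NSrc \<mu>) f) (lift_arr X)))"
    using D.whiskL_hom[OF lX(2) G'f'] by simp
  show "iso2 D (whiskL D (FA (NTgt \<mu>) f) (lift_cell X))"
    by (rule D.iso2_whiskL[OF lX(3,2) G'f'])
  show "Comp D (Comp D (FA (NSrc \<mu>) f) (lift_arr X)) (NCmp \<epsilon> X) = Comp D (NCmp \<alpha> Y) (FA (NSrc \<epsilon>) f)"
    using D.comp_assoc[OF hX(1) lX(1) Gf] lX(4) two_nat_naturality[of \<alpha> f X Y] \<alpha> f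
    by (simp add: hom1_functor_cat)
  have "whiskR D (whiskL D (FA (NTgt \<mu>) f) (lift_cell X)) (NCmp \<epsilon> X)
      = whiskL D (FA (NTgt \<mu>) f) (whiskR D (lift_cell X) (NCmp \<epsilon> X))"
    by (rule D.whiskL_whiskR[OF lX(2) \<epsilon>X G'f', symmetric])
  also have "\<dots> = whiskR D (MCmp \<Psi> Y) (FA (NSrc \<epsilon>) f)"
    using lX(5) modification_naturality[of \<Psi> f X Y] \<Psi> \<alpha>' f
      by (simp add: hom2_functor_cat hom1_functor_cat)
  finally show "whiskR D (whiskL D (FA (NTgt \<mu>) f) (lift_cell X)) (NCmp \<epsilon> X) =
      whiskR D (MCmp \<Psi> Y) (FA (NSrc \<epsilon>) f)" .
qed

lemma lift_naturality:
  assumes f: "hom1 C f X Y"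
  shows "Comp D (lift_arr Y) (FA (NTgt \<epsilon>) f) = Comp D (FA (NSrc \<mu>) f) (lift_arr X)"
    "whiskR D (lift_cell Y) (FA (NTgt \<epsilon>) f) = whiskL D (FA (NTgt \<mu>) f) (lift_cell X)"
proof -
  have X: "X \<in> Obj C" and Y: "Y \<in> Obj C" using C.hom1_obj[OF f] by auto
  show "Comp D (lift_arr Y) (FA (NTgt \<epsilon>) f) = Comp D (FA (NSrc \<mu>) f) (lift_arr X)"
    "whiskR D (lift_cell Y) (FA (NTgt \<epsilon>) f) = whiskL D (FA (NTgt \<mu>) f) (lift_cell X)"
    using D.iso_filler_unique[OF lifting_problem_at(1)[OF X] lifting_problem_at(2)[OF Y]
        shifted_lifting_problem[OF f] lift_through_target[OF f] lift_through_source[OF f]] by auto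
qed

text \<open>The two sides agree after whiskering with the 2-epimorphism \<open>NCmp \<epsilon> X\<close>.\<close>

lemma lift_2naturality:
  assumes \<phi>: "hom2 C \<phi> f g" and f: "hom1 C f X Y"
  shows "whiskL D (lift_arr Y) (FC (NTgt \<epsilon>) \<phi>) = whiskR D (FC (NSrc \<mu>) \<phi>) (lift_arr X)"
proof -
  have X: "X \<in> Obj C" and Y: "Y \<in> Obj C" using C.hom1_obj[OF f] by auto
  have g: "hom1 C g X Y" using f C.hom2_parallel[OF \<phi>] by (simp add: hom1_def)
  note hX = square_component_hom1[OF X] and hY = square_component_hom1[OF Y]
    and lX = lift_at_props[OF X] and lY = lift_at_props[OF Y]
  note F\<phi> = two_functor_hom2[OF square_functors(1) \<phi>]
    and F'\<phi> = two_functor_hom2[OF square_functors(2) \<phi>]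
    and G\<phi> = two_functor_hom2[OF square_functors(3) \<phi>]
  note Ff = two_functor_hom1[OF square_functors(1) f]
    and F'f = two_functor_hom1[OF square_functors(2) f]
    and Gf = two_functor_hom1[OF square_functors(3) f]
  have lhs: "hom2 D (whiskL D (lift_arr Y) (FC (NTgt \<epsilon>) \<phi>))
      (Comp D (lift_arr Y) (FA (NTgt \<epsilon>) f)) (Comp D (lift_arr Y) (FA (NTgt \<epsilon>) g))"
    by (rule D.whiskL_hom[OF F'\<phi>]) (use lY(1) F'f in \<open>simp add: hom1_def\<close>)
  have rhs: "hom2 D (whiskR D (FC (NSrc \<mu>) \<phi>) (lift_arr X))
      (Comp D (lift_arr Y) (FA (NTgt \<epsilon>) f)) (Comp D (lift_arr Y) (FA (NTgt \<epsilon>) g))"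
    using D.whiskR_hom[OF G\<phi>, of "lift_arr X" "FO (NTgt \<epsilon>) X"] lX(1) Gf
      lift_naturality(1)[OF f] lift_naturality(1)[OF g] by (simp add: hom1_def)
  note nat\<epsilon> = two_nat_2naturality[OF pointwise_classD(1)[OF \<epsilon>] \<phi> f]
    and nat\<alpha> = two_nat_2naturality[of \<alpha> \<phi> f g X Y]
  have "whiskR D (whiskL D (lift_arr Y) (FC (NTgt \<epsilon>) \<phi>)) (NCmp \<epsilon> X)
      = whiskL D (lift_arr Y) (whiskL D (NCmp \<epsilon> Y) (FC (NSrc \<epsilon>) \<phi>))"
    using D.whiskL_whiskR[OF F'\<phi>, of "NCmp \<epsilon> X" _ "lift_arr Y" "FO (NSrc \<mu>) Y"] hX(1) F'f lY(1) nat\<epsilon>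
    by (simp add: hom1_def)
  also have "\<dots> = whiskL D (NCmp \<alpha> Y) (FC (NSrc \<epsilon>) \<phi>)"
    using D.whiskL_whiskL[OF F\<phi>, of "NCmp \<epsilon> Y" _ "lift_arr Y" "FO (NSrc \<mu>) Y"] hY(1) Ff lY(1,4)
    by (simp add: hom1_def)
  also have "\<dots> = whiskR D (FC (NSrc \<mu>) \<phi>) (Comp D (lift_arr X) (NCmp \<epsilon> X))"
    using nat\<alpha> \<alpha> f \<phi> lX(4) by (simp add: hom1_functor_cat)
  also have "\<dots> = whiskR D (whiskR D (FC (NSrc \<mu>) \<phi>) (lift_arr X)) (NCmp \<epsilon> X)"
    by (rule D.whiskR_whiskR[OF G\<phi>, symmetric]) (use hX(1) lX(1) Gf in \<open>simp_all add: hom1_def\<close>)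
  finally have "whiskR D (whiskL D (lift_arr Y) (FC (NTgt \<epsilon>) \<phi>)) (NCmp \<epsilon> X) =
      whiskR D (whiskR D (FC (NSrc \<mu>) \<phi>) (lift_arr X)) (NCmp \<epsilon> X)" .
  then show ?thesis
    by (intro D.E_whiskR_cancel[OF lifting_problem_at(1)[OF X] lhs rhs])
      (use D.comp_hom[OF F'f lY(1)] hX(1) in \<open>simp_all add: hom1_def\<close>)
qed

definition lift_nat where
  "lift_nat = \<lparr> NSrc = NTgt \<epsilon>, NTgt = NSrc \<mu>, NCmp = (\<lambda>X. if X \<in> Obj C then lift_arr X else undefined) \<rparr>"

lemma two_nat_lift_nat: "two_nat C D lift_nat"
  unfolding two_nat_def
proof (intro conjI ballI allI impI)
  show "two_functor C D (NSrc lift_nat)" "two_functor C D (NTgt lift_nat)"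
    using square_functors by (simp_all add: lift_nat_def)
  show "NCmp lift_nat X = undefined" if "X \<notin> Obj C" for X using that by (simp add: lift_nat_def)
  show "hom1 D (NCmp lift_nat X) (FO (NSrc lift_nat) X) (FO (NTgt lift_nat) X)" if "X \<in> Obj C" for X
    using lift_at_props(1)[OF that] that by (simp add: lift_nat_def)
  show "Comp D (FA (NTgt lift_nat) f) (NCmp lift_nat (Dom C f)) =
      Comp D (NCmp lift_nat (Cod C f)) (FA (NSrc lift_nat) f)" if "f \<in> Arr C" for f
    using lift_naturality(1)[OF C.hom1I[OF that]] C.dom_cod_obj[OF that] by (simp add: lift_nat_def)
  show "whiskL D (NCmp lift_nat (Cod C (Src C \<phi>))) (FC (NSrc lift_nat) \<phi>) =
      whiskR D (FC (NTgt lift_nat) \<phi>) (NCmp lift_nat (Dom C (Src C \<phi>)))" if "\<phi> \<in> Cell C" for \<phi>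
  proof -
    have "hom2 C \<phi> (Src C \<phi>) (Tgt C \<phi>)" and f: "hom1 C (Src C \<phi>) (Dom C (Src C \<phi>)) (Cod C (Src C \<phi>))"
      using C.cell_hom[OF that] by auto
    then show ?thesis using lift_2naturality C.hom1_obj[OF f] by (simp add: lift_nat_def)
  qed
qed

definition lift_mod where
  "lift_mod = \<lparr> MSrc = \<alpha>', MTgt = nat_comp C D \<mu> lift_nat,
     MCmp = (\<lambda>X. if X \<in> Obj C then lift_cell X else undefined) \<rparr>"

lemma modification_lift_mod: "modification C D lift_mod"
  unfolding modification_def
proof (intro conjI ballI allI impI)
  have \<alpha>'_nat: "two_nat C D \<alpha>'" "NSrc \<alpha>' = NTgt \<epsilon>" "NTgt \<alpha>' = NTgt \<mu>"
    using \<alpha>' by (auto simp: hom1_functor_cat)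
  show "two_nat C D (MSrc lift_mod)" using \<alpha>'_nat by (simp add: lift_mod_def)
  show "two_nat C D (MTgt lift_mod)"
    using two_nat_nat_comp[OF two_nat_lift_nat pointwise_classD(1)[OF \<mu>]]
      by (simp add: lift_mod_def lift_nat_def)
  show "NSrc (MSrc lift_mod) = NSrc (MTgt lift_mod)" "NTgt (MSrc lift_mod) = NTgt (MTgt lift_mod)"
    using \<alpha>'_nat by (simp_all add: lift_mod_def lift_nat_def)
  show "MCmp lift_mod X = undefined" if "X \<notin> Obj C" for X using that by (simp add: lift_mod_def)
  show "hom2 D (MCmp lift_mod X) (NCmp (MSrc lift_mod) X) (NCmp (MTgt lift_mod) X)" if "X \<in> Obj C" for X
    using lift_at_props(2)[OF that] that by (simp add: lift_mod_def lift_nat_def)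
  show "whiskR D (MCmp lift_mod (Cod C f)) (FA (NSrc (MSrc lift_mod)) f) =
      whiskL D (FA (NTgt (MSrc lift_mod)) f) (MCmp lift_mod (Dom C f))" if "f \<in> Arr C" for f
    using lift_naturality(2)[OF C.hom1I[OF that]] C.dom_cod_obj[OF that] \<alpha>'_nat
      by (simp add: lift_mod_def)
qed

lemma lift_nat_ends: "NSrc lift_nat = NTgt \<epsilon>" "NTgt lift_nat = NSrc \<mu>"
  by (simp_all add: lift_nat_def)

lemma lift_is_filler: "iso_filler DC \<epsilon> \<mu> \<alpha> \<alpha>' \<Psi> lift_nat lift_mod"
  unfolding iso_filler_def functor_cat_simps
proof (intro conjI)
  have \<alpha>_nat: "two_nat C D \<alpha>" "NSrc \<alpha> = NSrc \<epsilon>" "NTgt \<alpha> = NSrc \<mu>"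
    using \<alpha> by (auto simp: hom1_functor_cat)
  have \<Psi>_mod: "modification C D \<Psi>" "MSrc \<Psi> = nat_comp C D \<alpha>' \<epsilon>" "MTgt \<Psi> = nat_comp C D \<mu> \<alpha>"
    using \<Psi> by (auto simp: hom2_functor_cat)
  note \<epsilon>_nat = pointwise_classD(1)[OF \<epsilon>] and \<mu>_nat = pointwise_classD(1)[OF \<mu>]
  show "hom1 DC lift_nat (NTgt \<epsilon>) (NSrc \<mu>)" using two_nat_lift_nat
      by (simp add: hom1_functor_cat lift_nat_def)
  show "hom2 DC lift_mod \<alpha>' (nat_comp C D \<mu> lift_nat)"
    using modification_lift_mod by (simp add: hom2_functor_cat lift_mod_def)
  show "iso2 DC lift_mod"
    by (rule iso2_functor_catI[OF modification_lift_mod])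
      (use lift_at_props(3) in \<open>simp add: lift_mod_def\<close>)
  show "nat_comp C D lift_nat \<epsilon> = \<alpha>"
    by (rule two_nat_eqI[OF two_nat_nat_comp[OF \<epsilon>_nat two_nat_lift_nat lift_nat_ends(1)[symmetric]]
        \<alpha>_nat(1)])
      (use \<alpha>_nat lift_at_props(4) in \<open>simp_all add: lift_nat_def\<close>)
  have "nat_comp C D (nat_comp C D \<mu> lift_nat) \<epsilon> = nat_comp C D \<mu> \<alpha>"
  proof (rule two_nat_eqI)
    show "two_nat C D (nat_comp C D (nat_comp C D \<mu> lift_nat) \<epsilon>)"
      using two_nat_nat_comp[OF \<epsilon>_nat two_nat_nat_comp[OF two_nat_lift_nat \<mu>_nat lift_nat_ends(2)]]
        lift_nat_ends
      by simp
    show "two_nat C D (nat_comp C D \<mu> \<alpha>)" using two_nat_nat_comp[OF \<alpha>_nat(1) \<mu>_nat] \<alpha>_nat by simp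
    show "NCmp (nat_comp C D (nat_comp C D \<mu> lift_nat) \<epsilon>) X = NCmp (nat_comp C D \<mu> \<alpha>) X"
      if X: "X \<in> Obj C" for X
      using X D.comp_assoc[OF square_component_hom1(1)[OF X] lift_at_props(1)[OF X]
          square_component_hom1(2)[OF X]]
        lift_at_props(4)[OF X] by (simp add: lift_nat_def)
  qed (use \<alpha>_nat in simp_all)
  then show "whiskR DC lift_mod \<epsilon> = \<Psi>"
  proof (intro tmod.equality)
    show "MCmp (whiskR DC lift_mod \<epsilon>) = MCmp \<Psi>"
    proof
      fix X show "MCmp (whiskR DC lift_mod \<epsilon>) X = MCmp \<Psi> X"
        by (cases "X \<in> Obj C")
          (use lift_at_props(5) modification_undefined[OF \<Psi>_mod(1)] in
            \<open>simp_all add: whiskR_functor_cat lift_mod_def\<close>)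
    qed
  qed (use \<Psi>_mod in \<open>simp_all add: whiskR_functor_cat lift_mod_def\<close>)
qed

lemma filler_components:
  assumes "iso_filler DC \<epsilon> \<mu> \<alpha> \<alpha>' \<Psi> \<delta> \<Psi>'" and X: "X \<in> Obj C"
  shows "filler_at X (NCmp \<delta> X) (MCmp \<Psi>' X)"
proof -
  have \<delta>: "hom1 DC \<delta> (NTgt \<epsilon>) (NSrc \<mu>)" and \<Psi>': "hom2 DC \<Psi>' \<alpha>' (nat_comp C D \<mu> \<delta>)"
    and iso: "iso2 DC \<Psi>'" and \<delta>\<epsilon>: "nat_comp C D \<delta> \<epsilon> = \<alpha>" and \<Psi>'\<epsilon>: "whiskR DC \<Psi>' \<epsilon> = \<Psi>"
    using assms(1) unfolding iso_filler_def by auto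
  have "Comp D (NCmp \<delta> X) (NCmp \<epsilon> X) = NCmp \<alpha> X"
    using arg_cong[OF \<delta>\<epsilon>, of "\<lambda>\<nu>. NCmp \<nu> X"] X by simp
  moreover have "whiskR D (MCmp \<Psi>' X) (NCmp \<epsilon> X) = MCmp \<Psi> X"
    using arg_cong[OF \<Psi>'\<epsilon>, of "\<lambda>\<Gamma>. MCmp \<Gamma> X"] X by (simp add: whiskR_functor_cat)
  ultimately show ?thesis
    unfolding iso_filler_def
    using hom1_functor_cat_component[OF \<delta> X] hom2_functor_cat_component[OF \<Psi>' X]
      iso2_functor_cat_component[OF iso X] square_component_hom1[OF X] X
    by (simp add: hom1_def)
qed

lemma filler_unique:
  assumes "iso_filler DC \<epsilon> \<mu> \<alpha> \<alpha>' \<Psi> \<delta> \<Psi>'"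
  shows "\<delta> = lift_nat \<and> \<Psi>' = lift_mod"
proof -
  have \<delta>: "two_nat C D \<delta>" "NSrc \<delta> = NTgt \<epsilon>" "NTgt \<delta> = NSrc \<mu>"
    and \<Psi>': "modification C D \<Psi>'" "MSrc \<Psi>' = \<alpha>'" "MTgt \<Psi>' = nat_comp C D \<mu> \<delta>"
    using assms unfolding iso_filler_def by (auto simp: hom1_functor_cat hom2_functor_cat)
  have at: "NCmp \<delta> X = lift_arr X \<and> MCmp \<Psi>' X = lift_cell X" if "X \<in> Obj C" for X
    using lift_at_unique[OF that filler_components[OF assms that]] .
  have "\<delta> = lift_nat"
    by (rule two_nat_eqI[OF \<delta>(1) two_nat_lift_nat]) (use \<delta> at in \<open>simp_all add: lift_nat_def\<close>)
  moreover have "\<Psi>' = lift_mod"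
    by (rule modification_eqI[OF \<Psi>'(1) modification_lift_mod])
      (use \<Psi>' \<open>\<delta> = lift_nat\<close> at in \<open>simp_all add: lift_mod_def\<close>)
  ultimately show ?thesis ..
qed

lemma filler_id2:
  assumes "iso_filler DC \<epsilon> \<mu> \<alpha> \<alpha>' \<Psi> \<delta> \<Psi>'" and \<Psi>_id: "\<Psi> = Id2 DC (nat_comp C D \<alpha>' \<epsilon>)"
  shows "nat_comp C D \<mu> \<delta> = \<alpha>' \<and> \<Psi>' = Id2 DC \<alpha>'"
proof -
  have \<delta>: "two_nat C D \<delta>" "NSrc \<delta> = NTgt \<epsilon>" "NTgt \<delta> = NSrc \<mu>"
    and \<Psi>': "modification C D \<Psi>'" "MSrc \<Psi>' = \<alpha>'" "MTgt \<Psi>' = nat_comp C D \<mu> \<delta>"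
    using assms(1) unfolding iso_filler_def by (auto simp: hom1_functor_cat hom2_functor_cat)
  have \<alpha>'_nat: "two_nat C D \<alpha>'" "NSrc \<alpha>' = NTgt \<epsilon>" "NTgt \<alpha>' = NTgt \<mu>"
    using \<alpha>' by (auto simp: hom1_functor_cat)
  have at: "Comp D (NCmp \<mu> X) (NCmp \<delta> X) = NCmp \<alpha>' X \<and> MCmp \<Psi>' X = Id2 D (NCmp \<alpha>' X)"
    if X: "X \<in> Obj C" for X
    using D.iso_filler_id2[OF lifting_problem_at[OF X] filler_components[OF assms(1) X]] \<Psi>_id X
    by (simp add: functor_cat_Id2)
  have "nat_comp C D \<mu> \<delta> = \<alpha>'"
    by (rule two_nat_eqI[OF two_nat_nat_comp[OF \<delta>(1) pointwise_classD(1)[OF \<mu>] \<delta>(3)] \<alpha>'_nat(1)])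
      (use \<delta> \<alpha>'_nat at in simp_all)
  moreover have "\<Psi>' = Id2 DC \<alpha>'"
  proof (rule tmod.equality)
    show "MCmp \<Psi>' = MCmp (Id2 DC \<alpha>')"
    proof
      fix X show "MCmp \<Psi>' X = MCmp (Id2 DC \<alpha>') X"
        by (cases "X \<in> Obj C")
          (use at modification_undefined[OF \<Psi>'(1)] in \<open>simp_all add: functor_cat_Id2\<close>)
    qed
  qed (use \<Psi>' \<open>nat_comp C D \<mu> \<delta> = \<alpha>'\<close> in \<open>simp_all add: functor_cat_Id2\<close>)
  ultimately show ?thesis ..
qed

end

context
  fixes \<epsilon> \<mu> \<alpha>1 \<alpha>2 \<alpha>1' \<alpha>2' \<Phi> \<Phi>' \<delta>1 \<delta>2
  assumes \<epsilon>: "\<epsilon> \<in> pointwise_class C D E" and \<mu>: "\<mu> \<in> pointwise_class C D M"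
    and \<alpha>1: "hom1 DC \<alpha>1 (NSrc \<epsilon>) (NSrc \<mu>)" and \<alpha>2: "hom1 DC \<alpha>2 (NSrc \<epsilon>) (NSrc \<mu>)"
    and \<alpha>1': "hom1 DC \<alpha>1' (NTgt \<epsilon>) (NTgt \<mu>)" and \<alpha>2': "hom1 DC \<alpha>2' (NTgt \<epsilon>) (NTgt \<mu>)"
    and sq1: "nat_comp C D \<alpha>1' \<epsilon> = nat_comp C D \<mu> \<alpha>1" and sq2: "nat_comp C D \<alpha>2' \<epsilon> = nat_comp C D \<mu> \<alpha>2"
    and \<Phi>: "hom2 DC \<Phi> \<alpha>1 \<alpha>2" and \<Phi>': "hom2 DC \<Phi>' \<alpha>1' \<alpha>2'"
    and \<Phi>\<Phi>': "whiskL DC \<mu> \<Phi> = whiskR DC \<Phi>' \<epsilon>"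
    and \<delta>1: "hom1 DC \<delta>1 (NTgt \<epsilon>) (NSrc \<mu>)"
    and \<delta>1\<epsilon>: "nat_comp C D \<delta>1 \<epsilon> = \<alpha>1" and \<mu>\<delta>1: "nat_comp C D \<mu> \<delta>1 = \<alpha>1'"
    and \<delta>2: "hom1 DC \<delta>2 (NTgt \<epsilon>) (NSrc \<mu>)"
    and \<delta>2\<epsilon>: "nat_comp C D \<delta>2 \<epsilon> = \<alpha>2" and \<mu>\<delta>2: "nat_comp C D \<mu> \<delta>2 = \<alpha>2'"
begin

lemma cell_problem_at:
  assumes X: "X \<in> Obj C"
  shows "NCmp \<epsilon> X \<in> E" "NCmp \<mu> X \<in> M"
    "hom1 D (NCmp \<alpha>1 X) (Dom D (NCmp \<epsilon> X)) (Dom D (NCmp \<mu> X))"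
    "hom1 D (NCmp \<alpha>2 X) (Dom D (NCmp \<epsilon> X)) (Dom D (NCmp \<mu> X))"
    "hom1 D (NCmp \<alpha>1' X) (Cod D (NCmp \<epsilon> X)) (Cod D (NCmp \<mu> X))"
    "hom1 D (NCmp \<alpha>2' X) (Cod D (NCmp \<epsilon> X)) (Cod D (NCmp \<mu> X))"
    "Comp D (NCmp \<alpha>1' X) (NCmp \<epsilon> X) = Comp D (NCmp \<mu> X) (NCmp \<alpha>1 X)"
    "Comp D (NCmp \<alpha>2' X) (NCmp \<epsilon> X) = Comp D (NCmp \<mu> X) (NCmp \<alpha>2 X)"
    "hom2 D (MCmp \<Phi> X) (NCmp \<alpha>1 X) (NCmp \<alpha>2 X)" "hom2 D (MCmp \<Phi>' X) (NCmp \<alpha>1' X) (NCmp \<alpha>2' X)"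
    "whiskL D (NCmp \<mu> X) (MCmp \<Phi> X) = whiskR D (MCmp \<Phi>' X) (NCmp \<epsilon> X)"
    "hom1 D (NCmp \<delta>1 X) (Cod D (NCmp \<epsilon> X)) (Dom D (NCmp \<mu> X))"
    "Comp D (NCmp \<delta>1 X) (NCmp \<epsilon> X) = NCmp \<alpha>1 X" "Comp D (NCmp \<mu> X) (NCmp \<delta>1 X) = NCmp \<alpha>1' X"
    "hom1 D (NCmp \<delta>2 X) (Cod D (NCmp \<epsilon> X)) (Dom D (NCmp \<mu> X))"
    "Comp D (NCmp \<delta>2 X) (NCmp \<epsilon> X) = NCmp \<alpha>2 X" "Comp D (NCmp \<mu> X) (NCmp \<delta>2 X) = NCmp \<alpha>2' X"
proof -
  have \<epsilon>X: "hom1 D (NCmp \<epsilon> X) (FO (NSrc \<epsilon>) X) (FO (NTgt \<epsilon>) X)"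
    and \<mu>X: "hom1 D (NCmp \<mu> X) (FO (NSrc \<mu>) X) (FO (NTgt \<mu>) X)"
    using two_nat_hom1[OF pointwise_classD(1)[OF \<epsilon>] X] two_nat_hom1[OF pointwise_classD(1)[OF \<mu>] X] .
  have component: "NCmp \<nu> X = NCmp \<nu>' X" if "\<nu> = \<nu>'" for \<nu> \<nu>' :: "('o1,'a1,'c1,'o2,'a2,'c2) tnat"
    using that by simp
  show "NCmp \<epsilon> X \<in> E" "NCmp \<mu> X \<in> M"
    using pointwise_classD(2)[OF \<epsilon> X] pointwise_classD(2)[OF \<mu> X] .
  show "hom1 D (NCmp \<alpha>1 X) (Dom D (NCmp \<epsilon> X)) (Dom D (NCmp \<mu> X))"
    "hom1 D (NCmp \<alpha>2 X) (Dom D (NCmp \<epsilon> X)) (Dom D (NCmp \<mu> X))"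
    "hom1 D (NCmp \<alpha>1' X) (Cod D (NCmp \<epsilon> X)) (Cod D (NCmp \<mu> X))"
    "hom1 D (NCmp \<alpha>2' X) (Cod D (NCmp \<epsilon> X)) (Cod D (NCmp \<mu> X))"
    "hom1 D (NCmp \<delta>1 X) (Cod D (NCmp \<epsilon> X)) (Dom D (NCmp \<mu> X))"
    "hom1 D (NCmp \<delta>2 X) (Cod D (NCmp \<epsilon> X)) (Dom D (NCmp \<mu> X))"
    using hom1_functor_cat_component[OF _ X] \<alpha>1 \<alpha>2 \<alpha>1' \<alpha>2' \<delta>1 \<delta>2 \<epsilon>X \<mu>X by (auto simp: hom1_def)
  show "Comp D (NCmp \<alpha>1' X) (NCmp \<epsilon> X) = Comp D (NCmp \<mu> X) (NCmp \<alpha>1 X)"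
    "Comp D (NCmp \<alpha>2' X) (NCmp \<epsilon> X) = Comp D (NCmp \<mu> X) (NCmp \<alpha>2 X)"
    "Comp D (NCmp \<delta>1 X) (NCmp \<epsilon> X) = NCmp \<alpha>1 X" "Comp D (NCmp \<mu> X) (NCmp \<delta>1 X) = NCmp \<alpha>1' X"
    "Comp D (NCmp \<delta>2 X) (NCmp \<epsilon> X) = NCmp \<alpha>2 X" "Comp D (NCmp \<mu> X) (NCmp \<delta>2 X) = NCmp \<alpha>2' X"
    using component[OF sq1] component[OF sq2] component[OF \<delta>1\<epsilon>] component[OF \<mu>\<delta>1]
      component[OF \<delta>2\<epsilon>] component[OF \<mu>\<delta>2] X by simp_all
  show "hom2 D (MCmp \<Phi> X) (NCmp \<alpha>1 X) (NCmp \<alpha>2 X)" "hom2 D (MCmp \<Phi>' X) (NCmp \<alpha>1' X) (NCmp \<alpha>2' X)"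
    using hom2_functor_cat_component[OF \<Phi> X] hom2_functor_cat_component[OF \<Phi>' X] .
  show "whiskL D (NCmp \<mu> X) (MCmp \<Phi> X) = whiskR D (MCmp \<Phi>' X) (NCmp \<epsilon> X)"
    using arg_cong[OF \<Phi>\<Phi>', of "\<lambda>\<Gamma>. MCmp \<Gamma> X"] X by (simp add: whiskL_functor_cat whiskR_functor_cat)
qed

abbreviation cell_filler_at where
  "cell_filler_at X \<Delta> \<equiv> hom2 D \<Delta> (NCmp \<delta>1 X) (NCmp \<delta>2 X) \<and>
     whiskR D \<Delta> (NCmp \<epsilon> X) = MCmp \<Phi> X \<and> whiskL D (NCmp \<mu> X) \<Delta> = MCmp \<Phi>' X"

definition cell_lift where "cell_lift X = (THE \<Delta>. cell_filler_at X \<Delta>)"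

lemma cell_lift_at: "X \<in> Obj C \<Longrightarrow> cell_filler_at X (cell_lift X)"
  unfolding cell_lift_def by (rule theI', rule D.two_cell_filler_ex1[OF cell_problem_at])

lemma cell_lift_at_unique: "X \<in> Obj C \<Longrightarrow> cell_filler_at X \<Delta> \<Longrightarrow> \<Delta> = cell_lift X"
  using D.two_cell_filler_ex1[OF cell_problem_at] cell_lift_at by blast

text \<open>As for the 1-cell lifts, the two sides agree after whiskering with the 2-epimorphism
  \<open>NCmp \<epsilon> X\<close>.\<close>

lemma cell_lift_naturality:
  assumes f: "hom1 C f X Y"
  shows "whiskR D (cell_lift Y) (FA (NTgt \<epsilon>) f) = whiskL D (FA (NSrc \<mu>) f) (cell_lift X)"
proof -
  have X: "X \<in> Obj C" and Y: "Y \<in> Obj C" using C.hom1_obj[OF f] by auto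
  note pX = cell_problem_at[OF X] and pY = cell_problem_at[OF Y]
  note \<Delta>X = cell_lift_at[OF X] and \<Delta>Y = cell_lift_at[OF Y]
  note \<epsilon>_nat = pointwise_classD(1)[OF \<epsilon>] and \<mu>_nat = pointwise_classD(1)[OF \<mu>]
  have \<epsilon>X: "hom1 D (NCmp \<epsilon> X) (FO (NSrc \<epsilon>) X) (FO (NTgt \<epsilon>) X)"
    and \<epsilon>Y: "hom1 D (NCmp \<epsilon> Y) (FO (NSrc \<epsilon>) Y) (FO (NTgt \<epsilon>) Y)"
    using two_nat_hom1[OF \<epsilon>_nat X] two_nat_hom1[OF \<epsilon>_nat Y] .
  note Ff = two_functor_hom1[OF two_nat_src[OF \<epsilon>_nat] f]
    and F'f = two_functor_hom1[OF two_nat_tgt[OF \<epsilon>_nat] f]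
    and Gf = two_functor_hom1[OF two_nat_src[OF \<mu>_nat] f]
  have F'f': "hom1 D (FA (NTgt \<epsilon>) f) (FO (NTgt \<epsilon>) X) (Dom D (NCmp \<delta>1 Y))"
    and Gf': "hom1 D (FA (NSrc \<mu>) f) (Cod D (NCmp \<delta>1 X)) (FO (NSrc \<mu>) Y)"
    and \<epsilon>X': "hom1 D (NCmp \<epsilon> X) (FO (NSrc \<epsilon>) X) (Dom D (NCmp \<delta>1 X))"
    and \<epsilon>Y': "hom1 D (NCmp \<epsilon> Y) (FO (NSrc \<epsilon>) Y) (Dom D (NCmp \<delta>1 Y))"
    using F'f Gf \<epsilon>X \<epsilon>Y pX(12) pY(12) two_nat_hom1[OF \<mu>_nat X] by (auto simp: hom1_def)
  have \<delta>_nat: "Comp D (FA (NSrc \<mu>) f) (NCmp \<delta> X) = Comp D (NCmp \<delta> Y) (FA (NTgt \<epsilon>) f)"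
    if "hom1 DC \<delta> (NTgt \<epsilon>) (NSrc \<mu>)" for \<delta>
    using two_nat_naturality[of \<delta> f X Y] that f by (simp add: hom1_functor_cat)
  have lhs: "hom2 D (whiskR D (cell_lift Y) (FA (NTgt \<epsilon>) f))
      (Comp D (NCmp \<delta>1 Y) (FA (NTgt \<epsilon>) f)) (Comp D (NCmp \<delta>2 Y) (FA (NTgt \<epsilon>) f))"
    using D.whiskR_hom[OF conjunct1[OF \<Delta>Y] F'f'] .
  have rhs: "hom2 D (whiskL D (FA (NSrc \<mu>) f) (cell_lift X))
      (Comp D (NCmp \<delta>1 Y) (FA (NTgt \<epsilon>) f)) (Comp D (NCmp \<delta>2 Y) (FA (NTgt \<epsilon>) f))"
    using D.whiskL_hom[OF conjunct1[OF \<Delta>X] Gf'] \<delta>_nat[OF \<delta>1] \<delta>_nat[OF \<delta>2] by simp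
  have "whiskR D (whiskR D (cell_lift Y) (FA (NTgt \<epsilon>) f)) (NCmp \<epsilon> X)
      = whiskR D (cell_lift Y) (Comp D (NCmp \<epsilon> Y) (FA (NSrc \<epsilon>) f))"
    using D.whiskR_whiskR[OF conjunct1[OF \<Delta>Y] F'f' \<epsilon>X] two_nat_naturality[OF \<epsilon>_nat f] by simp
  also have "\<dots> = whiskR D (MCmp \<Phi> Y) (FA (NSrc \<epsilon>) f)"
    using D.whiskR_whiskR[OF conjunct1[OF \<Delta>Y] \<epsilon>Y' Ff] \<Delta>Y by simp
  also have "\<dots> = whiskL D (FA (NSrc \<mu>) f) (MCmp \<Phi> X)"
    using modification_naturality[of \<Phi> f X Y] \<Phi> \<alpha>1 f by (simp add: hom2_functor_cat hom1_functor_cat)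
  also have "\<dots> = whiskR D (whiskL D (FA (NSrc \<mu>) f) (cell_lift X)) (NCmp \<epsilon> X)"
    using D.whiskL_whiskR[OF conjunct1[OF \<Delta>X] \<epsilon>X' Gf'] \<Delta>X by simp
  finally have "whiskR D (whiskR D (cell_lift Y) (FA (NTgt \<epsilon>) f)) (NCmp \<epsilon> X) =
      whiskR D (whiskL D (FA (NSrc \<mu>) f) (cell_lift X)) (NCmp \<epsilon> X)" .
  then show ?thesis
    by (intro D.E_whiskR_cancel[OF pX(1) lhs rhs])
      (use D.comp_hom[OF F'f' D.hom1I[OF D.hom1_arr[OF pY(12)]]] \<epsilon>X in \<open>simp_all add: hom1_def\<close>)
qed

definition cell_lift_mod where
  "cell_lift_mod = \<lparr> MSrc = \<delta>1, MTgt = \<delta>2, MCmp = (\<lambda>X. if X \<in> Obj C then cell_lift X else undefined) \<rparr>"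

lemma modification_cell_lift_mod: "modification C D cell_lift_mod"
  unfolding modification_def
proof (intro conjI ballI allI impI)
  have \<delta>: "two_nat C D \<delta>1" "two_nat C D \<delta>2" "NSrc \<delta>1 = NSrc \<delta>2" "NTgt \<delta>1 = NTgt \<delta>2"
    using \<delta>1 \<delta>2 by (auto simp: hom1_functor_cat)
  show "two_nat C D (MSrc cell_lift_mod)" "two_nat C D (MTgt cell_lift_mod)"
    "NSrc (MSrc cell_lift_mod) = NSrc (MTgt cell_lift_mod)"
    "NTgt (MSrc cell_lift_mod) = NTgt (MTgt cell_lift_mod)"
    using \<delta> by (simp_all add: cell_lift_mod_def)
  show "MCmp cell_lift_mod X = undefined" if "X \<notin> Obj C" for X using that
      by (simp add: cell_lift_mod_def)
  show "hom2 D (MCmp cell_lift_mod X) (NCmp (MSrc cell_lift_mod) X) (NCmp (MTgt cell_lift_mod) X)"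
    if "X \<in> Obj C" for X
    using cell_lift_at[OF that] that by (simp add: cell_lift_mod_def)
  show "whiskR D (MCmp cell_lift_mod (Cod C f)) (FA (NSrc (MSrc cell_lift_mod)) f) =
      whiskL D (FA (NTgt (MSrc cell_lift_mod)) f) (MCmp cell_lift_mod (Dom C f))" if "f \<in> Arr C" for f
    using cell_lift_naturality[OF C.hom1I[OF that]] C.dom_cod_obj[OF that] \<delta>1
    by (simp add: cell_lift_mod_def hom1_functor_cat)
qed

lemma cell_lift_ex1: "\<exists>!\<Delta>. hom2 DC \<Delta> \<delta>1 \<delta>2 \<and> whiskR DC \<Delta> \<epsilon> = \<Phi> \<and> whiskL DC \<mu> \<Delta> = \<Phi>'"
proof (rule ex1I[of _ cell_lift_mod])
  have \<Phi>_mod: "modification C D \<Phi>" "MSrc \<Phi> = \<alpha>1" "MTgt \<Phi> = \<alpha>2"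
    and \<Phi>'_mod: "modification C D \<Phi>'" "MSrc \<Phi>' = \<alpha>1'" "MTgt \<Phi>' = \<alpha>2'"
    using \<Phi> \<Phi>' by (auto simp: hom2_functor_cat)
  show "hom2 DC cell_lift_mod \<delta>1 \<delta>2 \<and> whiskR DC cell_lift_mod \<epsilon> = \<Phi> \<and> whiskL DC \<mu> cell_lift_mod = \<Phi>'"
  proof (intro conjI)
    show "hom2 DC cell_lift_mod \<delta>1 \<delta>2"
      using modification_cell_lift_mod by (simp add: hom2_functor_cat cell_lift_mod_def)
    show "whiskR DC cell_lift_mod \<epsilon> = \<Phi>"
    proof (rule tmod.equality)
      show "MCmp (whiskR DC cell_lift_mod \<epsilon>) = MCmp \<Phi>"
      proof
        fix X show "MCmp (whiskR DC cell_lift_mod \<epsilon>) X = MCmp \<Phi> X"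
          by (cases "X \<in> Obj C") (use cell_lift_at modification_undefined[OF \<Phi>_mod(1)] in
            \<open>simp_all add: whiskR_functor_cat cell_lift_mod_def\<close>)
      qed
    qed (use \<Phi>_mod \<delta>1\<epsilon> \<delta>2\<epsilon> in \<open>simp_all add: whiskR_functor_cat cell_lift_mod_def\<close>)
    show "whiskL DC \<mu> cell_lift_mod = \<Phi>'"
    proof (rule tmod.equality)
      show "MCmp (whiskL DC \<mu> cell_lift_mod) = MCmp \<Phi>'"
      proof
        fix X show "MCmp (whiskL DC \<mu> cell_lift_mod) X = MCmp \<Phi>' X"
          by (cases "X \<in> Obj C") (use cell_lift_at modification_undefined[OF \<Phi>'_mod(1)] in
            \<open>simp_all add: whiskL_functor_cat cell_lift_mod_def\<close>)
      qed
    qed (use \<Phi>'_mod \<mu>\<delta>1 \<mu>\<delta>2 in \<open>simp_all add: whiskL_functor_cat cell_lift_mod_def\<close>)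
  qed
next
  fix \<Delta> assume \<Delta>: "hom2 DC \<Delta> \<delta>1 \<delta>2 \<and> whiskR DC \<Delta> \<epsilon> = \<Phi> \<and> whiskL DC \<mu> \<Delta> = \<Phi>'"
  have \<Delta>_mod: "modification C D \<Delta>" "MSrc \<Delta> = \<delta>1" "MTgt \<Delta> = \<delta>2" using \<Delta> by (auto simp: hom2_functor_cat)
  have "MCmp \<Delta> X = cell_lift X" if X: "X \<in> Obj C" for X
  proof (rule cell_lift_at_unique[OF X], intro conjI)
    show "hom2 D (MCmp \<Delta> X) (NCmp \<delta>1 X) (NCmp \<delta>2 X)"
        using modification_hom2[OF \<Delta>_mod(1) X] \<Delta>_mod by simp
    show "whiskR D (MCmp \<Delta> X) (NCmp \<epsilon> X) = MCmp \<Phi> X"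
      using arg_cong[of _ _ "\<lambda>\<Gamma>. MCmp \<Gamma> X"] \<Delta> X by (auto simp: whiskR_functor_cat)
    show "whiskL D (NCmp \<mu> X) (MCmp \<Delta> X) = MCmp \<Phi>' X"
      using arg_cong[of _ _ "\<lambda>\<Gamma>. MCmp \<Gamma> X"] \<Delta> X by (auto simp: whiskL_functor_cat)
  qed
  then show "\<Delta> = cell_lift_mod"
    by (intro modification_eqI[OF \<Delta>_mod(1) modification_cell_lift_mod])
      (simp_all add: \<Delta>_mod cell_lift_mod_def)
qed

end

lemma enhanced_fs_functor_cat: "enhanced_fs DC (pointwise_class C D E) (pointwise_class C D M)"
  unfolding enhanced_fs_def Let_def functor_cat_simps
proof (intro conjI ballI allI impI subsetI)
  show "\<eta> \<in> {\<eta>. two_nat C D \<eta>}" if "\<eta> \<in> pointwise_class C D E" for \<eta>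
    using pointwise_classD(1)[OF that] by simp
  show "\<eta> \<in> {\<eta>. two_nat C D \<eta>}" if "\<eta> \<in> pointwise_class C D M" for \<eta>
    using pointwise_classD(1)[OF that] by simp
  show "\<eta> \<in> pointwise_class C D E" "\<eta> \<in> pointwise_class C D M" if "\<eta> \<in> {\<eta>. iso1 DC \<eta>}" for \<eta>
    using that iso1_functor_cat_component D.iso1_in_E D.iso1_in_M
    unfolding pointwise_class_def iso1_def by auto
  show "\<exists>\<epsilon>\<in>pointwise_class C D E. \<exists>\<mu>\<in>pointwise_class C D M. NTgt \<epsilon> = NSrc \<mu> \<and> \<alpha> = nat_comp C D \<mu> \<epsilon>"
    if "\<alpha> \<in> {\<eta>. two_nat C D \<eta>}" for \<alpha>
    using factorization_functor_cat that by simp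
next
  fix \<epsilon> \<mu> \<alpha> \<alpha>' \<Psi>
  assume problem: "\<epsilon> \<in> pointwise_class C D E" "\<mu> \<in> pointwise_class C D M"
    "hom1 DC \<alpha> (NSrc \<epsilon>) (NSrc \<mu>)" "hom1 DC \<alpha>' (NTgt \<epsilon>) (NTgt \<mu>)"
    "hom2 DC \<Psi> (nat_comp C D \<alpha>' \<epsilon>) (nat_comp C D \<mu> \<alpha>)" "iso2 DC \<Psi>"
  show "\<exists>!(\<delta>, \<Psi>'). hom1 DC \<delta> (NTgt \<epsilon>) (NSrc \<mu>) \<and> hom2 DC \<Psi>' \<alpha>' (nat_comp C D \<mu> \<delta>) \<and> iso2 DC \<Psi>' \<and>
      nat_comp C D \<delta> \<epsilon> = \<alpha> \<and> whiskR DC \<Psi>' \<epsilon> = \<Psi>"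
    using ex1_pairI[where Q = "iso_filler DC \<epsilon> \<mu> \<alpha> \<alpha>' \<Psi>",
        OF lift_is_filler[OF problem] filler_unique[OF problem]]
    by (simp add: iso_filler_def)
  show "nat_comp C D \<mu> \<delta> = \<alpha>'" "\<Psi>' = Id2 DC \<alpha>'"
    if "hom1 DC \<delta> (NTgt \<epsilon>) (NSrc \<mu>) \<and> hom2 DC \<Psi>' \<alpha>' (nat_comp C D \<mu> \<delta>) \<and> iso2 DC \<Psi>' \<and>
      nat_comp C D \<delta> \<epsilon> = \<alpha> \<and> whiskR DC \<Psi>' \<epsilon> = \<Psi>" "\<Psi> = Id2 DC (nat_comp C D \<alpha>' \<epsilon>)" for \<delta> \<Psi>'
    using filler_id2[OF problem _ that(2)] that(1) unfolding iso_filler_def functor_cat_simps by blast+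
next
  fix \<epsilon> \<mu> \<alpha>1 \<alpha>2 \<alpha>1' \<alpha>2' \<Phi> \<Phi>' \<delta>1 \<delta>2
  assume "\<epsilon> \<in> pointwise_class C D E" "\<mu> \<in> pointwise_class C D M"
    "hom1 DC \<alpha>1 (NSrc \<epsilon>) (NSrc \<mu>)" "hom1 DC \<alpha>2 (NSrc \<epsilon>) (NSrc \<mu>)"
    "hom1 DC \<alpha>1' (NTgt \<epsilon>) (NTgt \<mu>)" "hom1 DC \<alpha>2' (NTgt \<epsilon>) (NTgt \<mu>)"
    "nat_comp C D \<alpha>1' \<epsilon> = nat_comp C D \<mu> \<alpha>1" "nat_comp C D \<alpha>2' \<epsilon> = nat_comp C D \<mu> \<alpha>2"
    "hom2 DC \<Phi> \<alpha>1 \<alpha>2" "hom2 DC \<Phi>' \<alpha>1' \<alpha>2'" "whiskL DC \<mu> \<Phi> = whiskR DC \<Phi>' \<epsilon>"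
    "hom1 DC \<delta>1 (NTgt \<epsilon>) (NSrc \<mu>)" "nat_comp C D \<delta>1 \<epsilon> = \<alpha>1" "nat_comp C D \<mu> \<delta>1 = \<alpha>1'"
    "hom1 DC \<delta>2 (NTgt \<epsilon>) (NSrc \<mu>)" "nat_comp C D \<delta>2 \<epsilon> = \<alpha>2" "nat_comp C D \<mu> \<delta>2 = \<alpha>2'"
  then show "\<exists>!\<Delta>. hom2 DC \<Delta> \<delta>1 \<delta>2 \<and> whiskR DC \<Delta> \<epsilon> = \<Phi> \<and> whiskL DC \<mu> \<Delta> = \<Phi>'"
    by (rule cell_lift_ex1)
qed

end

theorem proposition2p8:
  fixes C :: "('o1,'a1,'c1) twocat" and D :: "('o2,'a2,'c2) twocat"
    and E M :: "'a2 set"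
  assumes "two_category C" and "two_category D"
    and "enhanced_fs D E M"
    and "separates_parallel_pairs D E M"
    and "\<forall>\<epsilon>\<in>E. two_epi D \<epsilon>"
    and "\<forall>\<mu>\<in>M. two_mono D \<mu>"
  shows "enhanced_fs (functor_cat C D) (pointwise_class C D E) (pointwise_class C D M)"
proof -
  interpret functor_cat_fs C D E M
    using assms by (simp add: functor_cat_fs_def functor_2cat_def enhanced_fs_2epi_def
      enhanced_fs_2epi_axioms_def two_cat_iff_two_category)
  show ?thesis by (rule enhanced_fs_functor_cat)
qed

end
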